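(* Let $k\ge 2$ and let $\vec a=(a_1,\dots,a_{|\vec a|})$, $\vec b=(b_1,\dots,b_{|\vec b|})$ be (possibly empty) lists of underlined slots carrying arbitrary spectral parameters, while the slots $1,\dots,k$ carry spectral parameter $0$. Then $$\mathcal Q^{(k)}_{1(\underline{\vec a},2,\dots,k-1,\underline{\vec b})}-\mathcal R^{-1}_{1\underline{\vec a}}\mathcal Q^{(k)}_{1(2,\dots,k-1,\underline{\vec b})}\mathcal R_{1\underline{\vec a}}=\mathcal Q^{(k)}_{1(\underline{\vec a},2,\dots,k-1)}-\mathcal R^{-1}_{1\underline{\vec a}}\mathcal Q^{(k)}_{1(2,\dots,k-1)}\mathcal R_{1\underline{\vec a}},$$ $$\tilde{\mathcal Q}^{(k)}_{(\underline{\vec a},1,\dots,k-1,\underline{\vec b})k}-\mathcal R^{-1}_{\underline{\vec b}k}\tilde{\mathcal Q}^{(k)}_{(\underline{\vec a},1,\dots,k-1)k}\mathcal R_{\underline{\vec b}k}=\tilde{\mathcal Q}^{(k)}_{(1,\dots,k-1,\underline{\vec b})k}-\mathcal R^{-1}_{\underline{\vec b}k}\tilde{\mathcal Q}^{(k)}_{(1,\dots,k-1)k}\mathcal R_{\underline{\vec b}k}.$$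
   Context: Let $V$ be a finite-dimensional complex vector space, $\mathcal P$ the flip on $V\otimes V$, and $\mathcal R(u,v)\in\mathrm{End}(V\otimes V)[[u,v]]$ analytic around $0$, satisfying the Yang–Baxter equation $\mathcal R_{12}(u_1,u_2)\mathcal R_{13}(u_1,u_3)\mathcal R_{23}(u_2,u_3)=\mathcal R_{23}(u_2,u_3)\mathcal R_{13}(u_1,u_3)\mathcal R_{12}(u_1,u_2)$, regularity $\mathcal R(u,u)=\mathcal P$ and unitarity $\mathcal R_{12}(u,v)\mathcal R_{21}(v,u)=1$. Subscripts denote tensor slots; each slot $i$ carries a spectral parameter $u_i$. For ordered lists of distinct slots $I=(i_1,\dots,i_N)$, $J=(j_1,\dots,j_M)$ put $\mathcal R_{IJ}:=\prod_{p=1}^{N}\big(\mathcal R_{i_pj_M}(u_{i_p},u_{j_M})\cdots\mathcal R_{i_pj_1}(u_{i_p},u_{j_1})\big)$, factors for $p=1,\dots,N$ multiplied left to right (e.g. $\mathcal R_{1(23)}=\mathcal R_{13}\mathcal R_{12}$, $\mathcal R_{(12)3}=\mathcal R_{13}\mathcal R_{23}$); lists written inside brackets are concatenated, and a one-element list is written without brackets. Let $D_I:=\sum_{i\in I}\partial/\partial u_i$. For $k\ge2$: $\mathcal Q^{(k)}_{IJ}:=D_I^{k-2}(\mathcal R_{IJ}^{-1}D_I\mathcal R_{IJ})$, $\tilde{\mathcal Q}^{(k)}_{IJ}:=-D_J^{k-2}(\mathcal R_{IJ}^{-1}D_J\mathcal R_{IJ})$. Underline convention: an underlined slot $\underline i$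 carries an arbitrary spectral parameter $u_i$; a non-underlined slot carries spectral parameter $0$. For a list $\vec a=(a_1,\dots,a_m)$, $\underline{\vec a}$ denotes the list of underlined slots $\underline a_1,\dots,\underline a_m$. *)

theory Defs
  imports "HOL-Analysis.Analysis"
begin

text \<open>V = C^n with basis indices 0..<n.  Tensor slots are labelled by natural numbers.
  For a finite slot set S, a basis vector of the tensor product over S is a configuration
  x :: nat => nat with x i < n for i in S and x i = 0 outside S.  Operators are matrices
  indexed by configurations.\<close>

type_synonym sop = "(nat \<Rightarrow> nat) \<Rightarrow> (nat \<Rightarrow> nat) \<Rightarrow> complex"

definition cfgs :: "nat set \<Rightarrow> nat \<Rightarrow> (nat \<Rightarrow> nat) set" where
  "cfgs S n = {x. (\<forall>i\<in>S. x i < n) \<and> (\<forall>i. i \<notin> S \<longrightarrow> x i = 0)}"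

definition op_eq :: "nat set \<Rightarrow> nat \<Rightarrow> sop \<Rightarrow> sop \<Rightarrow> bool" where
  "op_eq S n A B \<longleftrightarrow> (\<forall>x\<in>cfgs S n. \<forall>y\<in>cfgs S n. A x y = B x y)"

definition opmul :: "nat set \<Rightarrow> nat \<Rightarrow> sop \<Rightarrow> sop \<Rightarrow> sop" where
  "opmul S n A B = (\<lambda>x y. \<Sum>z\<in>cfgs S n. A x z * B z y)"

definition opid :: sop where
  "opid = (\<lambda>x y. if x = y then 1 else 0)"

definition opsub :: "sop \<Rightarrow> sop \<Rightarrow> sop" where
  "opsub A B = (\<lambda>x y. A x y - B x y)"

definition opneg :: "sop \<Rightarrow> sop" where
  "opneg A = (\<lambda>x y. - A x y)"

definition opinv :: "nat set \<Rightarrow> nat \<Rightarrow> sop \<Rightarrow> sop" where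
  "opinv S n A = (SOME B. op_eq S n (opmul S n A B) opid \<and> op_eq S n (opmul S n B A) opid)"

definition conjop :: "nat set \<Rightarrow> nat \<Rightarrow> sop \<Rightarrow> sop \<Rightarrow> sop" where
  "conjop S n A B = opmul S n (opmul S n (opinv S n A) B) A"

definition opprod :: "nat set \<Rightarrow> nat \<Rightarrow> sop list \<Rightarrow> sop" where
  "opprod S n As = foldr (opmul S n) As opid"

text \<open>R(u,v) is given by its matrix entries R u v (a,b) (c,e) = <e_a (x) e_b | R(u,v) | e_c (x) e_e>.
  R_{ij}(u_i,u_j) acting in slots i and j, identity elsewhere; u is the vector of
  spectral parameters of all slots.\<close>
definition Rop :: "(complex \<Rightarrow> complex \<Rightarrow> nat \<times> nat \<Rightarrow> nat \<times> nat \<Rightarrow> complex)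
    \<Rightarrow> nat \<Rightarrow> nat \<Rightarrow> (nat \<Rightarrow> complex) \<Rightarrow> sop" where
  "Rop R i j u = (\<lambda>x y. R (u i) (u j) (x i, x j) (y i, y j) *
      (if (\<forall>l. l \<noteq> i \<longrightarrow> l \<noteq> j \<longrightarrow> x l = y l) then 1 else 0))"

text \<open>R_{IJ} = prod_p (R_{i_p j_M} ... R_{i_p j_1}), p = 1..N left to right.\<close>
definition RIJ :: "(complex \<Rightarrow> complex \<Rightarrow> nat \<times> nat \<Rightarrow> nat \<times> nat \<Rightarrow> complex)
    \<Rightarrow> nat set \<Rightarrow> nat \<Rightarrow> nat list \<Rightarrow> nat list \<Rightarrow> (nat \<Rightarrow> complex) \<Rightarrow> sop" where
  "RIJ R S n I J u = opprod S n (map (\<lambda>i. opprod S n (map (\<lambda>j. Rop R i j u) (rev J))) I)"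

text \<open>Shift of the spectral parameters of the slots in I by t; D_I is the derivative along it.\<close>
definition shift :: "(nat \<Rightarrow> complex) \<Rightarrow> nat list \<Rightarrow> complex \<Rightarrow> (nat \<Rightarrow> complex)" where
  "shift u I t = (\<lambda>i. if i \<in> set I then u i + t else u i)"

definition DD :: "nat list \<Rightarrow> nat \<Rightarrow> ((nat \<Rightarrow> complex) \<Rightarrow> sop) \<Rightarrow> (nat \<Rightarrow> complex) \<Rightarrow> sop" where
  "DD I m F u = (\<lambda>x y. (deriv ^^ m) (\<lambda>t. F (shift u I t) x y) 0)"

definition Qk :: "(complex \<Rightarrow> complex \<Rightarrow> nat \<times> nat \<Rightarrow> nat \<times> nat \<Rightarrow> complex)
    \<Rightarrow> nat set \<Rightarrow> nat \<Rightarrow> nat \<Rightarrow> nat list \<Rightarrow> nat list \<Rightarrow> (nat \<Rightarrow> complex) \<Rightarrow> sop" where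
  "Qk R S n k I J u = DD I (k - 2)
     (\<lambda>w. opmul S n (opinv S n (RIJ R S n I J w)) (DD I 1 (RIJ R S n I J) w)) u"

definition Qtk :: "(complex \<Rightarrow> complex \<Rightarrow> nat \<times> nat \<Rightarrow> nat \<times> nat \<Rightarrow> complex)
    \<Rightarrow> nat set \<Rightarrow> nat \<Rightarrow> nat \<Rightarrow> nat list \<Rightarrow> nat list \<Rightarrow> (nat \<Rightarrow> complex) \<Rightarrow> sop" where
  "Qtk R S n k I J u = opneg (DD J (k - 2)
     (\<lambda>w. opmul S n (opinv S n (RIJ R S n I J w)) (DD J 1 (RIJ R S n I J) w)) u)"

definition analytic_R :: "nat \<Rightarrow> real \<Rightarrow> (complex \<Rightarrow> complex \<Rightarrow> nat \<times> nat \<Rightarrow> nat \<times> nat \<Rightarrow> complex) \<Rightarrow> bool" where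
  "analytic_R n r R \<longleftrightarrow> 0 < r \<and>
     (\<forall>p q. fst p < n \<longrightarrow> snd p < n \<longrightarrow> fst q < n \<longrightarrow> snd q < n \<longrightarrow>
        (\<exists>c :: nat \<times> nat \<Rightarrow> complex. \<forall>u v. norm u < r \<longrightarrow> norm v < r \<longrightarrow>
            ((\<lambda>(i, j). c (i, j) * u ^ i * v ^ j) has_sum R u v p q) UNIV))"

end

theory Submission
  imports Defs "HOL-Complex_Analysis.Complex_Analysis" "HOL-Library.Function_Algebras"
begin

(* Shift the slot s (= 1, resp. = k) by t and split R_{sJ}(t) = P_p(t) P_c(t) P_q(t), where the
   middle block c consists of the slots 2..k-1 (resp. 1..k-1) and q of the slots of a (resp. b).
   The log-derivative of a triple product is
     P_q^-1 (P_c^-1 (P_p^-1 P_p') P_c) P_q + P_q^-1 (P_c^-1 P_c') P_q + P_q^-1 P_q'.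
   Every factor of P_c is R_{sj}(t, 0), which is the flip P_{sj} up to O(t) by regularity.
   Conjugating by these k - 2 factors pushes everything in P_p^-1 P_p' that is not O(t^(k-2))
   off the slot s and off the slots of q, where it commutes with P_q. Hence D^(k-2) of the first
   term is the conjugate by P_q(0) of a quantity Z_p depending only on p, and
     Q = P_q(0)^-1 Z_p P_q(0) + K_q
   with K_q independent of p. Both sides of each identity therefore equal K_q - P_q(0)^-1 K_[] P_q(0).
   Unitarity provides the inverses. *)

lemma finite_cfgs: "finite S \<Longrightarrow> finite (cfgs S n)"
proof -
  assume "finite S"
  moreover have "cfgs S n \<subseteq> {f. \<forall>x. (x \<in> S \<longrightarrow> f x \<in> {..<n}) \<and> (x \<notin> S \<longrightarrow> f x = 0)}"
    by (auto simp: cfgs_def)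
  ultimately show ?thesis
    using finite_set_of_finite_funs[of S "{..<n}" 0] by (meson finite_lessThan finite_subset)
qed

section \<open>Operators on a tensor product\<close>

locale tensor_ops =
  fixes S :: "nat set" and n :: nat
  assumes finite_S: "finite S" and n_pos: "0 < n"
begin

abbreviation "cfg \<equiv> cfgs S n"

text \<open>Operators are only meaningful on \<open>cfg\<close>; \<open>restr\<close> picks the representative that vanishes
  outside it, so that \<open>op_eq\<close> becomes equality and products become associative on the nose.\<close>

definition restr :: "sop \<Rightarrow> sop" where
  "restr A = (\<lambda>x y. if x \<in> cfg \<and> y \<in> cfg then A x y else 0)"

definition mult :: "sop \<Rightarrow> sop \<Rightarrow> sop" (infixl "\<odot>" 70) where
  "A \<odot> B = restr (opmul S n A B)"

definition one_op :: sop where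
  "one_op = restr opid"

definition scale :: "complex \<Rightarrow> sop \<Rightarrow> sop" where
  "scale c A = (\<lambda>x y. c * A x y)"

definition conjugate :: "sop \<Rightarrow> sop \<Rightarrow> sop" where
  "conjugate A X = opinv S n A \<odot> X \<odot> A"

lemma finite_cfg: "finite cfg"
  using finite_cfgs[OF finite_S] .

lemma op_eq_iff_restr: "op_eq S n A B \<longleftrightarrow> restr A = restr B"
  unfolding op_eq_def restr_def by (auto simp: fun_eq_iff)

lemma restr_restr [simp]: "restr (restr A) = restr A"
  by (auto simp: restr_def fun_eq_iff)

lemma mult_restr_left [simp]: "restr A \<odot> B = A \<odot> B"
  unfolding mult_def restr_def opmul_def by (intro ext) (simp cong: sum.cong)

lemma mult_restr_right [simp]: "A \<odot> restr B = A \<odot> B"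
  unfolding mult_def restr_def opmul_def by (intro ext) (simp cong: sum.cong)

lemma restr_mult [simp]: "restr (A \<odot> B) = A \<odot> B"
  unfolding mult_def by simp

lemma restr_ext:
  assumes "restr A = A" "restr B = B" "\<And>x y. x \<in> cfg \<Longrightarrow> y \<in> cfg \<Longrightarrow> A x y = B x y"
  shows "A = B"
  by (metis (no_types, lifting) assms restr_def ext)

lemma mult_apply: "x \<in> cfg \<Longrightarrow> y \<in> cfg \<Longrightarrow> (A \<odot> B) x y = (\<Sum>z\<in>cfg. A x z * B z y)"
  by (simp add: mult_def restr_def opmul_def)

lemma opmul_assoc: "opmul S n (opmul S n A B) D x y = opmul S n A (opmul S n B D) x y"
proof -
  have "opmul S n (opmul S n A B) D x y = (\<Sum>z\<in>cfg. \<Sum>w\<in>cfg. A x w * B w z * D z y)"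
    unfolding opmul_def by (simp add: sum_distrib_right)
  also have "\<dots> = (\<Sum>w\<in>cfg. \<Sum>z\<in>cfg. A x w * B w z * D z y)"
    by (rule sum.swap)
  also have "\<dots> = opmul S n A (opmul S n B D) x y"
    unfolding opmul_def by (simp add: sum_distrib_left mult.assoc)
  finally show ?thesis .
qed

lemma mult_assoc: "A \<odot> B \<odot> D = A \<odot> (B \<odot> D)"
proof -
  have "A \<odot> B \<odot> D = restr (opmul S n (opmul S n A B) D)"
    by (metis mult_def mult_restr_left)
  moreover have "A \<odot> (B \<odot> D) = restr (opmul S n A (opmul S n B D))"
    by (metis mult_def mult_restr_right)
  ultimately show ?thesis
    by (simp add: opmul_assoc[abs_def])
qed

lemma mult_opid_left [simp]: "opid \<odot> A = restr A"
proof (intro ext)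
  fix x y
  have "x \<in> cfg \<Longrightarrow> opmul S n opid A x y = (\<Sum>z\<in>cfg. if z = x then A z y else 0)"
    unfolding opmul_def opid_def by (rule sum.cong) auto
  then show "(opid \<odot> A) x y = restr A x y"
    using finite_cfg by (simp add: mult_def restr_def)
qed

lemma mult_opid_right [simp]: "A \<odot> opid = restr A"
proof (intro ext)
  fix x y
  have "y \<in> cfg \<Longrightarrow> opmul S n A opid x y = (\<Sum>z\<in>cfg. if z = y then A x z else 0)"
    unfolding opmul_def opid_def by (rule sum.cong) auto
  then show "(A \<odot> opid) x y = restr A x y"
    using finite_cfg by (simp add: mult_def restr_def)
qed

lemma mult_one_op_left [simp]: "one_op \<odot> A = restr A"
  unfolding one_op_def by simp

lemma mult_one_op_right [simp]: "A \<odot> one_op = restr A"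
  unfolding one_op_def by simp

lemma restr_zero [simp]: "restr 0 = 0"
  by (simp add: restr_def fun_eq_iff)

lemma restr_add [simp]: "restr (A + B) = restr A + restr B"
  by (auto simp: restr_def fun_eq_iff)

lemma restr_diff [simp]: "restr (A - B) = restr A - restr B"
  by (auto simp: restr_def fun_eq_iff)

lemma mult_add_left: "(A + B) \<odot> D = A \<odot> D + B \<odot> D"
  unfolding mult_def opmul_def restr_def by (auto simp: fun_eq_iff distrib_right sum.distrib)

lemma mult_add_right: "A \<odot> (B + D) = A \<odot> B + A \<odot> D"
  unfolding mult_def opmul_def restr_def by (auto simp: fun_eq_iff distrib_left sum.distrib)

lemma mult_uminus_left: "(- A) \<odot> B = - (A \<odot> B)"
  by (simp add: mult_def restr_def opmul_def fun_eq_iff sum_negf)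

lemma mult_uminus_right: "A \<odot> (- B) = - (A \<odot> B)"
  by (simp add: mult_def restr_def opmul_def fun_eq_iff sum_negf)

lemma restr_opsub: "restr (opsub X Y) = restr X - restr Y"
  by (simp add: opsub_def restr_def fun_eq_iff)

lemma restr_opneg: "restr (opneg X) = - restr X"
  by (simp add: opneg_def restr_def fun_eq_iff)

definition invertible_op :: "sop \<Rightarrow> bool" where
  "invertible_op A \<longleftrightarrow> (\<exists>B. A \<odot> B = one_op \<and> B \<odot> A = one_op)"

lemma opinv_unique:
  assumes "A \<odot> B = one_op" "B \<odot> A = one_op"
  shows "restr (opinv S n A) = restr B"
proof -
  have "\<exists>B'. op_eq S n (opmul S n A B') opid \<and> op_eq S n (opmul S n B' A) opid"
    using assms by (intro exI[of _ B]) (simp add: op_eq_iff_restr mult_def one_op_def)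
  then have "op_eq S n (opmul S n A (opinv S n A)) opid \<and> op_eq S n (opmul S n (opinv S n A) A) opid"
    unfolding opinv_def by (rule someI_ex)
  then have inv: "A \<odot> opinv S n A = one_op" "opinv S n A \<odot> A = one_op"
    by (auto simp: op_eq_iff_restr mult_def one_op_def)
  have "restr (opinv S n A) = opinv S n A \<odot> (A \<odot> B)"
    using assms by simp
  also have "\<dots> = restr B"
    by (simp add: mult_assoc[symmetric] inv)
  finally show ?thesis .
qed

lemma invertible_opD:
  assumes "invertible_op A"
  shows "A \<odot> opinv S n A = one_op" and "opinv S n A \<odot> A = one_op"
  using assms opinv_unique unfolding invertible_op_def
  by (metis mult_restr_left mult_restr_right)+

lemma opinv_restr [simp]: "opinv S n (restr A) = opinv S n A"
proof -
  have "op_eq S n (opmul S n (restr A) B) opid = op_eq S n (opmul S n A B) opid"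
    and "op_eq S n (opmul S n B (restr A)) opid = op_eq S n (opmul S n B A) opid" for B
    by (simp_all add: op_eq_iff_restr opmul_def[symmetric] flip: mult_def)
  then show ?thesis
    unfolding opinv_def by simp
qed

lemma invertible_op_mult:
  assumes "invertible_op A" "invertible_op B"
  shows "invertible_op (A \<odot> B)" and "restr (opinv S n (A \<odot> B)) = opinv S n B \<odot> opinv S n A"
proof -
  let ?Ai = "opinv S n A" and ?Bi = "opinv S n B"
  have "A \<odot> B \<odot> (?Bi \<odot> ?Ai) = A \<odot> (B \<odot> ?Bi) \<odot> ?Ai"
    by (simp only: mult_assoc)
  also have "\<dots> = one_op"
    using invertible_opD(1)[OF assms(1)] invertible_opD(1)[OF assms(2)] by simp
  finally have AB: "A \<odot> B \<odot> (?Bi \<odot> ?Ai) = one_op" .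
  have "?Bi \<odot> ?Ai \<odot> (A \<odot> B) = ?Bi \<odot> (?Ai \<odot> A) \<odot> B"
    by (simp only: mult_assoc)
  also have "\<dots> = one_op"
    using invertible_opD(2)[OF assms(1)] invertible_opD(2)[OF assms(2)] by simp
  finally have BA: "?Bi \<odot> ?Ai \<odot> (A \<odot> B) = one_op" .
  show "invertible_op (A \<odot> B)"
    unfolding invertible_op_def using AB BA by blast
  show "restr (opinv S n (A \<odot> B)) = ?Bi \<odot> ?Ai"
    using opinv_unique[OF AB BA] by simp
qed

lemma conjugate_restr [simp]:
  "conjugate (restr A) X = conjugate A X" "conjugate A (restr X) = conjugate A X"
  by (simp_all add: conjugate_def)

lemma conjugate_add: "conjugate A (X + Y) = conjugate A X + conjugate A Y"
  by (simp add: conjugate_def mult_add_left mult_add_right)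

lemma conjugate_diff: "conjugate A (X - Y) = conjugate A X - conjugate A Y"
  using conjugate_add[of A "X - Y" Y] by simp

lemma conjugate_uminus: "conjugate A (- X) = - conjugate A X"
  by (simp add: conjugate_def mult_uminus_left mult_uminus_right)

lemma conjugate_opid [simp]: "conjugate opid X = restr X"
proof -
  have "restr (opinv S n opid) = one_op"
    using opinv_unique[of opid one_op] by (simp add: one_op_def)
  then show ?thesis
    unfolding conjugate_def by (metis mult_one_op_left mult_opid_right mult_restr_left)
qed

end

section \<open>Operators acting on a subset of the slots\<close>

definition zero_on :: "nat set \<Rightarrow> (nat \<Rightarrow> nat) \<Rightarrow> (nat \<Rightarrow> nat)" where
  "zero_on T x = (\<lambda>i. if i \<in> T then 0 else x i)"

definition swap_slots :: "nat \<Rightarrow> nat \<Rightarrow> (nat \<Rightarrow> nat) \<Rightarrow> (nat \<Rightarrow> nat)" where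
  "swap_slots s j x = (\<lambda>i. if i = s then x j else if i = j then x s else x i)"

definition swap_op :: "nat \<Rightarrow> nat \<Rightarrow> sop" where
  "swap_op s j = (\<lambda>x y. if y = swap_slots s j x then 1 else 0)"

lemma swap_slots_swap_slots [simp]: "swap_slots s j (swap_slots s j x) = x"
  by (auto simp: swap_slots_def fun_eq_iff)

lemma swap_op_commute: "swap_op i j = swap_op j i"
  unfolding swap_op_def swap_slots_def by (auto simp: fun_eq_iff)

context tensor_ops
begin

text \<open>\<open>trivial_on T A\<close> says that \<open>A = A' \<otimes> 1\<close> with respect to the splitting of the slots
  into \<open>S - T\<close> and \<open>T\<close>.\<close>

definition trivial_on :: "nat set \<Rightarrow> sop \<Rightarrow> bool" where
  "trivial_on T A \<longleftrightarrow> (\<forall>x\<in>cfg. \<forall>y\<in>cfg.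
     A x y = (if \<forall>i\<in>T. x i = y i then A (zero_on T x) (zero_on T y) else 0))"

lemma trivial_onD:
  "trivial_on T A \<Longrightarrow> x \<in> cfg \<Longrightarrow> y \<in> cfg \<Longrightarrow>
   A x y = (if \<forall>i\<in>T. x i = y i then A (zero_on T x) (zero_on T y) else 0)"
  unfolding trivial_on_def by blast

lemma zero_on_in_cfg: "x \<in> cfg \<Longrightarrow> zero_on T x \<in> cfg"
  using n_pos by (auto simp: cfgs_def zero_on_def)

lemma swap_slots_in_cfg: "x \<in> cfg \<Longrightarrow> s \<in> S \<Longrightarrow> j \<in> S \<Longrightarrow> swap_slots s j x \<in> cfg"
  by (auto simp: cfgs_def swap_slots_def)

lemma trivial_on_restr [simp]: "trivial_on T (restr A) \<longleftrightarrow> trivial_on T A"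
  unfolding trivial_on_def restr_def using zero_on_in_cfg by auto

lemma trivial_on_add: "trivial_on T A \<Longrightarrow> trivial_on T B \<Longrightarrow> trivial_on T (A + B)"
  unfolding trivial_on_def by auto

lemma trivial_on_diff: "trivial_on T A \<Longrightarrow> trivial_on T B \<Longrightarrow> trivial_on T (A - B)"
  unfolding trivial_on_def by auto

lemma trivial_on_zero: "trivial_on T 0"
  unfolding trivial_on_def by auto

lemma trivial_on_scale: "trivial_on T A \<Longrightarrow> trivial_on T (scale c A)"
  unfolding trivial_on_def scale_def by auto

lemma trivial_on_one_op: "trivial_on T one_op"
  unfolding trivial_on_def one_op_def restr_def opid_def using zero_on_in_cfg
  by (auto simp: zero_on_def fun_eq_iff)

lemma trivial_on_subset:
  assumes "T' \<subseteq> T" "trivial_on T A"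
  shows "trivial_on T' A"
  unfolding trivial_on_def
proof (intro ballI)
  fix x y assume x: "x \<in> cfg" and y: "y \<in> cfg"
  show "A x y = (if \<forall>i\<in>T'. x i = y i then A (zero_on T' x) (zero_on T' y) else 0)"
  proof (cases "\<forall>i\<in>T'. x i = y i")
    case True
    have "(\<forall>i\<in>T. zero_on T' x i = zero_on T' y i) \<longleftrightarrow> (\<forall>i\<in>T. x i = y i)"
      using True by (auto simp: zero_on_def)
    moreover have "zero_on T (zero_on T' z) = zero_on T z" for z
      using assms(1) by (auto simp: zero_on_def fun_eq_iff)
    ultimately show ?thesis
      using True trivial_onD[OF assms(2) x y]
        trivial_onD[OF assms(2) zero_on_in_cfg[OF x] zero_on_in_cfg[OF y]] by simp
  next
    case False
    then show ?thesis
      using trivial_onD[OF assms(2) x y] assms(1) by auto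
  qed
qed

lemma mult_zero_on:
  assumes A: "trivial_on T A" and B: "trivial_on T B" and x: "x \<in> cfg" and y: "y \<in> cfg"
    and xy: "\<forall>i\<in>T. x i = y i"
  shows "(A \<odot> B) x y = (A \<odot> B) (zero_on T x) (zero_on T y)"
proof -
  let ?P = "\<lambda>w z. \<forall>i\<in>T. w i = z i"
  define x' where "x' = zero_on T x"
  define y' where "y' = zero_on T y"
  have x': "x' \<in> cfg" and y': "y' \<in> cfg"
    using zero_on_in_cfg x y by (auto simp: x'_def y'_def)
  \<comment> \<open>Overwriting the \<open>T\<close>-part of the summation variable matches the two sums term by term.\<close>
  define h where "h = (\<lambda>z i. if i \<in> T then x' i else z i)"
  define g where "g = (\<lambda>z i. if i \<in> T then x i else z i)"
  have "(A \<odot> B) x y = (\<Sum>z\<in>{z\<in>cfg. ?P x z}. A x z * B z y)"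
    unfolding mult_apply[OF x y] using finite_cfg trivial_onD[OF A x]
    by (intro sum.mono_neutral_right) auto
  also have "\<dots> = (\<Sum>z\<in>{z\<in>cfg. ?P x' z}. A x' z * B z y')"
  proof (rule sum.reindex_bij_witness[where i = g and j = h])
    fix z assume z: "z \<in> {z\<in>cfg. ?P x' z}"
    show "g z \<in> {z \<in> cfg. ?P x z}" using z x by (auto simp: g_def cfgs_def)
    show "h (g z) = z" using z by (auto simp: g_def h_def fun_eq_iff)
  next
    fix z assume z: "z \<in> {z\<in>cfg. ?P x z}"
    show "h z \<in> {z \<in> cfg. ?P x' z}" using z x' by (auto simp: h_def cfgs_def)
    show "g (h z) = z" using z by (auto simp: g_def h_def fun_eq_iff)
    have hz: "h z \<in> cfg" using z x' by (auto simp: h_def cfgs_def)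
    have zh: "zero_on T (h z) = zero_on T z" "zero_on T x' = zero_on T x" "zero_on T y' = zero_on T y"
      by (auto simp: h_def x'_def y'_def zero_on_def fun_eq_iff)
    have "A x' (h z) = A x z"
      using trivial_onD[OF A x' hz] trivial_onD[OF A x] z zh by (auto simp: h_def)
    moreover have "B (h z) y' = B z y"
    proof -
      have "?P z y" "?P (h z) y'"
        using z xy by (auto simp: h_def x'_def y'_def zero_on_def)
      then show ?thesis
        using trivial_onD[OF B hz y'] trivial_onD[OF B _ y] z zh by auto
    qed
    ultimately show "A x' (h z) * B (h z) y' = A x z * B z y" by simp
  qed
  also have "\<dots> = (A \<odot> B) x' y'"
    unfolding mult_apply[OF x' y'] using finite_cfg trivial_onD[OF A x']
    by (intro sum.mono_neutral_left) auto
  finally show ?thesis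
    by (simp add: x'_def y'_def)
qed

lemma trivial_on_mult:
  assumes A: "trivial_on T A" and B: "trivial_on T B"
  shows "trivial_on T (A \<odot> B)"
  unfolding trivial_on_def
proof (intro ballI)
  fix x y assume x: "x \<in> cfg" and y: "y \<in> cfg"
  show "(A \<odot> B) x y = (if \<forall>i\<in>T. x i = y i then (A \<odot> B) (zero_on T x) (zero_on T y) else 0)"
  proof (cases "\<forall>i\<in>T. x i = y i")
    case True
    then show ?thesis
      using mult_zero_on[OF A B x y] by simp
  next
    case False
    have "A x z * B z y = 0" if "z \<in> cfg" for z
      using trivial_onD[OF A x that] trivial_onD[OF B that y] False by auto
    then have "(A \<odot> B) x y = 0"
      using x y by (simp add: mult_apply sum.neutral)
    then show ?thesis
      using False by auto
  qed
qed

lemma mult_complementary_apply: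
  assumes A: "trivial_on T A" and B: "trivial_on (S - T) B" and x: "x \<in> cfg" and y: "y \<in> cfg"
  defines "m \<equiv> \<lambda>i. if i \<in> T then x i else y i"
  shows "(A \<odot> B) x y = A x m * B m y"
proof -
  have m: "m \<in> cfg"
    using x y by (auto simp: m_def cfgs_def)
  have "A x z * B z y = 0" if z: "z \<in> cfg" "z \<noteq> m" for z
  proof -
    obtain i where "z i \<noteq> m i"
      using z(2) by auto
    then have "(i \<in> T \<and> x i \<noteq> z i) \<or> (i \<in> S - T \<and> z i \<noteq> y i)"
      using x y z(1) by (cases "i \<in> S") (auto simp: m_def cfgs_def split: if_splits)
    then show ?thesis
      using trivial_onD[OF A x z(1)] trivial_onD[OF B z(1) y] by auto
  qed
  then have "(\<Sum>z\<in>cfg - {m}. A x z * B z y) = 0"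
    by (intro sum.neutral) auto
  then show ?thesis
    unfolding mult_apply[OF x y] using sum.remove[OF finite_cfg m, of "\<lambda>z. A x z * B z y"] by simp
qed

lemma trivial_on_commute:
  assumes A: "trivial_on T A" and B: "trivial_on (S - T) B"
  shows "A \<odot> B = B \<odot> A"
proof (rule restr_ext)
  fix x y assume x: "x \<in> cfg" and y: "y \<in> cfg"
  define m where "m = (\<lambda>i. if i \<in> T then x i else y i)"
  define m' where "m' = (\<lambda>i. if i \<in> S - T then x i else y i)"
  have out: "\<And>i. i \<notin> S \<Longrightarrow> x i = 0 \<and> y i = 0"
    using x y by (auto simp: cfgs_def)
  have "trivial_on (S - (S - T)) A"
    using A by (rule trivial_on_subset[rotated]) auto
  then have BA: "(B \<odot> A) x y = B x m' * A m' y"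
    unfolding m'_def by (rule mult_complementary_apply[OF B _ x y])
  have AB: "(A \<odot> B) x y = A x m * B m y"
    unfolding m_def by (rule mult_complementary_apply[OF A B x y])
  have "m \<in> cfg" "m' \<in> cfg"
    using x y by (auto simp: m_def m'_def cfgs_def)
  moreover have "zero_on T m = zero_on T y" "zero_on T m' = zero_on T x"
    "zero_on (S - T) m = zero_on (S - T) x" "zero_on (S - T) m' = zero_on (S - T) y"
    using out by (auto simp: m_def m'_def zero_on_def fun_eq_iff)
  ultimately have "A x m = A m' y" "B m y = B x m'"
    using trivial_onD[OF A x, of m] trivial_onD[OF A _ y, of m'] trivial_onD[OF B _ y, of m]
      trivial_onD[OF B x, of m'] by (simp_all add: m_def m'_def)
  then show "(A \<odot> B) x y = (B \<odot> A) x y"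
    using AB BA by simp
qed simp_all

lemma conj_trivial_on:
  assumes "trivial_on W Y" "trivial_on (S - W) A" "Ai \<odot> A = one_op"
  shows "Ai \<odot> Y \<odot> A = restr Y"
proof -
  have "Ai \<odot> Y \<odot> A = Ai \<odot> (A \<odot> Y)"
    by (simp add: mult_assoc trivial_on_commute[OF assms(1,2)])
  also have "\<dots> = restr Y"
    using assms(3) by (simp flip: mult_assoc)
  finally show ?thesis .
qed

lemma conj_split:
  assumes "trivial_on W Y" "trivial_on (S - W) A" "Ai \<odot> A = one_op" "restr Z = restr (Y + E)"
  shows "Ai \<odot> Z \<odot> A = restr Y + Ai \<odot> E \<odot> A"
proof -
  have "Ai \<odot> Z \<odot> A = Ai \<odot> restr (Y + E) \<odot> A"
    using assms(4) by (metis mult_restr_left mult_restr_right)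
  also have "\<dots> = Ai \<odot> Y \<odot> A + Ai \<odot> E \<odot> A"
    by (simp add: mult_add_right mult_add_left)
  finally show ?thesis
    using conj_trivial_on[OF assms(1-3)] by simp
qed

lemma conjugate_swap_op:
  assumes s: "s \<in> S" and j: "j \<in> S"
  shows "swap_op s j \<odot> X \<odot> swap_op s j = restr (\<lambda>x y. X (swap_slots s j x) (swap_slots s j y))"
proof (intro ext)
  fix x y
  show "(swap_op s j \<odot> X \<odot> swap_op s j) x y = restr (\<lambda>x y. X (swap_slots s j x) (swap_slots s j y)) x y"
  proof (cases "x \<in> cfg \<and> y \<in> cfg")
    case False
    then show ?thesis by (auto simp: mult_def restr_def)
  next
    case True
    then have x: "x \<in> cfg" and y: "y \<in> cfg" by auto
    have left: "(swap_op s j \<odot> X) x w = X (swap_slots s j x) w" if w: "w \<in> cfg" for w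
    proof -
      have "(swap_op s j \<odot> X) x w = (\<Sum>z\<in>cfg. if z = swap_slots s j x then X z w else 0)"
        unfolding mult_apply[OF x w] swap_op_def by (rule sum.cong) auto
      then show ?thesis
        using swap_slots_in_cfg[OF x s j] finite_cfg by simp
    qed
    have "(swap_op s j \<odot> X \<odot> swap_op s j) x y
        = (\<Sum>w\<in>cfg. if w = swap_slots s j y then X (swap_slots s j x) w else 0)"
      unfolding mult_apply[OF x y]
    proof (rule sum.cong)
      fix w assume "w \<in> cfg"
      moreover have "y = swap_slots s j w \<longleftrightarrow> w = swap_slots s j y"
        by (metis swap_slots_swap_slots)
      ultimately show "(swap_op s j \<odot> X) x w * swap_op s j w y
          = (if w = swap_slots s j y then X (swap_slots s j x) w else 0)"
        using left by (simp add: swap_op_def)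
    qed simp
    also have "\<dots> = X (swap_slots s j x) (swap_slots s j y)"
      using swap_slots_in_cfg[OF y s j] finite_cfg by simp
    finally show ?thesis
      using x y by (simp add: restr_def)
  qed
qed

lemma trivial_on_swap:
  assumes s: "s \<in> S" and j: "j \<in> S" and sj: "s \<noteq> j" and sT: "s \<notin> T" and jT: "j \<notin> T"
    and X: "trivial_on (insert j T) X"
  shows "trivial_on (insert s T) (swap_op s j \<odot> X \<odot> swap_op s j)"
proof -
  have "trivial_on (insert s T) (\<lambda>x y. X (swap_slots s j x) (swap_slots s j y))"
    unfolding trivial_on_def
  proof (intro ballI)
    fix x y assume x: "x \<in> cfg" and y: "y \<in> cfg"
    have "(\<forall>i\<in>insert j T. swap_slots s j x i = swap_slots s j y i) \<longleftrightarrow> (\<forall>i\<in>insert s T. x i = y i)"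
      using sT jT sj by (auto simp: swap_slots_def)
    moreover have "zero_on (insert j T) (swap_slots s j w) = swap_slots s j (zero_on (insert s T) w)" for w
      using sT jT sj by (auto simp: swap_slots_def zero_on_def fun_eq_iff)
    ultimately show "X (swap_slots s j x) (swap_slots s j y) = (if \<forall>i\<in>insert s T. x i = y i
        then X (swap_slots s j (zero_on (insert s T) x)) (swap_slots s j (zero_on (insert s T) y)) else 0)"
      using trivial_onD[OF X swap_slots_in_cfg[OF x s j] swap_slots_in_cfg[OF y s j]] by simp
  qed
  then show ?thesis
    unfolding conjugate_swap_op[OF s j] by simp
qed

definition factor_prod :: "(nat \<Rightarrow> complex \<Rightarrow> sop) \<Rightarrow> nat list \<Rightarrow> complex \<Rightarrow> sop" where
  "factor_prod f js t = opprod S n (map (\<lambda>j. f j t) js)"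

lemma restr_opprod_Cons: "restr (opprod S n (A # As)) = A \<odot> opprod S n As"
  by (simp add: opprod_def mult_def)

lemma restr_opprod_single: "restr (opprod S n [A]) = restr A"
  using restr_opprod_Cons[of A "[]"] by (simp add: opprod_def)

lemma restr_opprod_cong:
  "(\<And>x. x \<in> set xs \<Longrightarrow> restr (f x) = restr (g x)) \<Longrightarrow>
     restr (opprod S n (map f xs)) = restr (opprod S n (map g xs))"
proof (induction xs)
  case (Cons x xs)
  have "f x \<odot> opprod S n (map f xs) = restr (f x) \<odot> restr (opprod S n (map f xs))"
    by simp
  also have "\<dots> = g x \<odot> opprod S n (map g xs)"
    using Cons by simp
  finally show ?case
    by (simp add: restr_opprod_Cons)
qed simp

lemma factor_prod_Nil [simp]: "factor_prod f [] t = opid"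
  by (simp add: factor_prod_def opprod_def)

lemma restr_factor_prod_Cons: "restr (factor_prod f (j # js) t) = f j t \<odot> factor_prod f js t"
  by (simp add: factor_prod_def restr_opprod_Cons)

lemma restr_factor_prod_append:
  "restr (factor_prod f (xs @ ys) t) = factor_prod f xs t \<odot> factor_prod f ys t"
proof (induction xs)
  case (Cons j xs)
  have "restr (factor_prod f ((j # xs) @ ys) t) = f j t \<odot> restr (factor_prod f (xs @ ys) t)"
    by (simp add: restr_factor_prod_Cons)
  also have "\<dots> = f j t \<odot> factor_prod f xs t \<odot> factor_prod f ys t"
    using Cons by (simp add: mult_assoc)
  also have "\<dots> = factor_prod f (j # xs) t \<odot> factor_prod f ys t"
    by (metis mult_restr_left restr_factor_prod_Cons)
  finally show ?case .
qed simp

lemma restr_factor_prod_snoc: "restr (factor_prod f (xs @ [j]) t) = factor_prod f xs t \<odot> f j t"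
proof -
  have "restr (factor_prod f [j] t) = restr (f j t)"
    by (simp add: restr_factor_prod_Cons)
  then show ?thesis
    by (metis mult_restr_right restr_factor_prod_append)
qed

lemma factor_prod_inverse:
  assumes "\<And>j. j \<in> set js \<Longrightarrow> g j t \<odot> f j t = one_op \<and> f j t \<odot> g j t = one_op"
  shows "factor_prod g (rev js) t \<odot> factor_prod f js t = one_op
       \<and> factor_prod f js t \<odot> factor_prod g (rev js) t = one_op"
  using assms
proof (induction js)
  case Nil
  then show ?case by (simp add: one_op_def)
next
  case (Cons j js)
  let ?F = "factor_prod f js t" and ?G = "factor_prod g (rev js) t"
  have IH: "?G \<odot> ?F = one_op" "?F \<odot> ?G = one_op" and j: "g j t \<odot> f j t = one_op" "f j t \<odot> g j t = one_op"
    using Cons by auto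
  have F: "restr (factor_prod f (j # js) t) = f j t \<odot> ?F"
    and G: "restr (factor_prod g (rev (j # js)) t) = ?G \<odot> g j t"
    by (simp_all add: restr_factor_prod_Cons restr_factor_prod_snoc)
  have "factor_prod g (rev (j # js)) t \<odot> factor_prod f (j # js) t = ?G \<odot> (g j t \<odot> f j t) \<odot> ?F"
    using arg_cong2[OF G F, of "(\<odot>)"] by (simp add: mult_assoc)
  moreover have "factor_prod f (j # js) t \<odot> factor_prod g (rev (j # js)) t = f j t \<odot> (?F \<odot> ?G) \<odot> g j t"
    using arg_cong2[OF F G, of "(\<odot>)"] by (simp add: mult_assoc)
  ultimately show ?case
    using IH j by simp
qed

lemma trivial_on_factor_prod:
  "(\<And>j. j \<in> set js \<Longrightarrow> trivial_on T (f j t)) \<Longrightarrow> trivial_on T (factor_prod f js t)"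
proof (induction js)
  case Nil
  then show ?case
    using trivial_on_one_op by (metis factor_prod_Nil one_op_def trivial_on_restr)
next
  case (Cons j js)
  then have "trivial_on T (restr (factor_prod f (j # js) t))"
    by (simp add: restr_factor_prod_Cons trivial_on_mult)
  then show ?case by simp
qed

end

section \<open>Holomorphic operator families\<close>

lemma higher_deriv_sum:
  fixes f :: "'a \<Rightarrow> complex \<Rightarrow> complex"
  assumes "finite A" "\<And>a. a \<in> A \<Longrightarrow> f a holomorphic_on U" "open U" "z \<in> U"
  shows "(deriv ^^ m) (\<lambda>t. \<Sum>a\<in>A. f a t) z = (\<Sum>a\<in>A. (deriv ^^ m) (f a) z)"
  using assms(1,2)
proof (induction A rule: finite_induct)
  case (insert a A)
  have "(deriv ^^ m) (\<lambda>t. f a t + (\<Sum>a\<in>A. f a t)) z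
      = (deriv ^^ m) (f a) z + (deriv ^^ m) (\<lambda>t. \<Sum>a\<in>A. f a t) z"
    using insert assms(3,4) by (intro higher_deriv_add) (auto intro!: holomorphic_intros)
  then show ?case
    using insert by simp
qed simp

locale tensor_holo = tensor_ops +
  fixes U :: "complex set"
  assumes open_U: "open U" and zero_in_U: "0 \<in> U"
begin

definition holo :: "(complex \<Rightarrow> sop) \<Rightarrow> bool" where
  "holo F \<longleftrightarrow> (\<forall>x\<in>cfg. \<forall>y\<in>cfg. (\<lambda>t. F t x y) holomorphic_on U)"

definition deriv0 :: "nat \<Rightarrow> (complex \<Rightarrow> sop) \<Rightarrow> sop" where
  "deriv0 m F = restr (\<lambda>x y. (deriv ^^ m) (\<lambda>t. F t x y) 0)"

definition dderiv :: "(complex \<Rightarrow> sop) \<Rightarrow> complex \<Rightarrow> sop" where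
  "dderiv F = (\<lambda>t x y. deriv (\<lambda>s. F s x y) t)"

definition log_deriv :: "(complex \<Rightarrow> sop) \<Rightarrow> complex \<Rightarrow> sop" where
  "log_deriv F t = opinv S n (F t) \<odot> dderiv F t"

definition vanishes_to :: "nat \<Rightarrow> (complex \<Rightarrow> sop) \<Rightarrow> bool" where
  "vanishes_to m F \<longleftrightarrow> (\<forall>i<m. deriv0 i F = 0)"

lemma holoD: "holo F \<Longrightarrow> x \<in> cfg \<Longrightarrow> y \<in> cfg \<Longrightarrow> (\<lambda>t. F t x y) holomorphic_on U"
  unfolding holo_def by blast

lemma holo_mult:
  assumes "holo F" "holo G"
  shows "holo (\<lambda>t. F t \<odot> G t)"
  unfolding holo_def
proof (intro ballI)
  fix x y assume x: "x \<in> cfg" and y: "y \<in> cfg"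
  have "(\<lambda>t. \<Sum>z\<in>cfg. F t x z * G t z y) holomorphic_on U"
    using holoD[OF assms(1) x] holoD[OF assms(2) _ y] by (intro holomorphic_intros) auto
  then show "(\<lambda>t. (F t \<odot> G t) x y) holomorphic_on U"
    using x y by (simp add: mult_apply)
qed

lemma holo_add: "holo F \<Longrightarrow> holo G \<Longrightarrow> holo (\<lambda>t. F t + G t)"
  unfolding holo_def by (auto intro!: holomorphic_intros)

lemma holo_diff: "holo F \<Longrightarrow> holo G \<Longrightarrow> holo (\<lambda>t. F t - G t)"
  unfolding holo_def by (auto intro!: holomorphic_intros)

lemma holo_const: "holo (\<lambda>t. A)"
  unfolding holo_def by (auto intro!: holomorphic_intros)

lemma holo_restr: "holo F \<Longrightarrow> holo (\<lambda>t. restr (F t))"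
  unfolding holo_def restr_def by auto

lemma holo_scale: "f holomorphic_on U \<Longrightarrow> holo (\<lambda>t. scale (f t) A)"
  unfolding holo_def scale_def by (auto intro!: holomorphic_intros)

lemma holo_dderiv: "holo F \<Longrightarrow> holo (dderiv F)"
  unfolding holo_def dderiv_def using open_U by (auto intro!: holomorphic_intros)

lemma restr_eq_entry:
  "restr A = restr B \<Longrightarrow> x \<in> cfg \<Longrightarrow> y \<in> cfg \<Longrightarrow> A x y = B x y"
  unfolding restr_def by (metis (mono_tags))

lemma holo_cong:
  assumes "\<And>t. t \<in> U \<Longrightarrow> restr (F t) = restr (G t)" "holo F"
  shows "holo G"
  unfolding holo_def
proof (intro ballI)
  fix x y assume x: "x \<in> cfg" and y: "y \<in> cfg"
  have "F t x y = G t x y" if "t \<in> U" for t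
    using restr_eq_entry[OF assms(1)[OF that] x y] .
  then show "(\<lambda>t. G t x y) holomorphic_on U"
    using holoD[OF assms(2) x y] by (simp cong: holomorphic_cong)
qed

lemma deriv0_cong:
  assumes "\<And>t. t \<in> U \<Longrightarrow> restr (F t) = restr (G t)"
  shows "deriv0 m F = deriv0 m G"
proof -
  have "(deriv ^^ m) (\<lambda>t. F t x y) 0 = (deriv ^^ m) (\<lambda>t. G t x y) 0" if "x \<in> cfg" "y \<in> cfg" for x y
  proof (rule higher_deriv_cong_ev)
    show "\<forall>\<^sub>F t in nhds 0. F t x y = G t x y"
      using eventually_nhds_in_open[OF open_U zero_in_U]
    proof (rule eventually_mono)
      show "t \<in> U \<Longrightarrow> F t x y = G t x y" for t
        using restr_eq_entry[OF assms that] by blast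
    qed
  qed simp
  then show ?thesis
    unfolding deriv0_def restr_def by (auto simp: fun_eq_iff)
qed

lemma dderiv_cong:
  assumes "\<And>t. t \<in> U \<Longrightarrow> restr (F t) = restr (G t)" "s \<in> U"
  shows "restr (dderiv F s) = restr (dderiv G s)"
proof -
  have "deriv (\<lambda>t. F t x y) s = deriv (\<lambda>t. G t x y) s" if "x \<in> cfg" "y \<in> cfg" for x y
  proof (rule deriv_cong_ev)
    show "\<forall>\<^sub>F t in nhds s. F t x y = G t x y"
      using eventually_nhds_in_open[OF open_U assms(2)]
    proof (rule eventually_mono)
      show "t \<in> U \<Longrightarrow> F t x y = G t x y" for t
        using restr_eq_entry[OF assms(1) that] by blast
    qed
  qed simp
  then show ?thesis
    unfolding dderiv_def restr_def by (auto simp: fun_eq_iff)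
qed

lemma deriv0_restr [simp]: "deriv0 m (\<lambda>t. restr (F t)) = deriv0 m F"
  by (rule deriv0_cong) simp

lemma restr_deriv0 [simp]: "restr (deriv0 m F) = deriv0 m F"
  unfolding deriv0_def by simp

lemma deriv0_0: "deriv0 0 F = restr (F 0)"
  unfolding deriv0_def restr_def by (simp add: fun_eq_iff)

lemma deriv0_add:
  assumes "holo F" "holo G"
  shows "deriv0 m (\<lambda>t. F t + G t) = deriv0 m F + deriv0 m G"
proof (intro ext)
  fix x y
  show "deriv0 m (\<lambda>t. F t + G t) x y = (deriv0 m F + deriv0 m G) x y"
  proof (cases "x \<in> cfg \<and> y \<in> cfg")
    case True
    then show ?thesis
      using higher_deriv_add[OF holoD[OF assms(1)] holoD[OF assms(2)] open_U zero_in_U]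
      by (simp add: deriv0_def restr_def)
  qed (auto simp: deriv0_def restr_def)
qed

lemma deriv0_diff:
  assumes "holo F" "holo G"
  shows "deriv0 m (\<lambda>t. F t - G t) = deriv0 m F - deriv0 m G"
proof (intro ext)
  fix x y
  show "deriv0 m (\<lambda>t. F t - G t) x y = (deriv0 m F - deriv0 m G) x y"
  proof (cases "x \<in> cfg \<and> y \<in> cfg")
    case True
    then show ?thesis
      using higher_deriv_diff[OF holoD[OF assms(1)] holoD[OF assms(2)] open_U zero_in_U]
      by (simp add: deriv0_def restr_def)
  qed (auto simp: deriv0_def restr_def)
qed

lemma deriv0_monomial:
  assumes "i \<le> m"
  shows "deriv0 i (\<lambda>t. scale (t ^ m / fact m) A) = (if i = m then restr A else 0)"
proof (intro ext)
  fix x y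
  have e: "(\<lambda>t. scale (t ^ m / fact m) A x y) = (\<lambda>t. A x y / fact m * t ^ m)"
    by (auto simp: scale_def fun_eq_iff)
  have "(deriv ^^ i) (\<lambda>t. A x y / fact m * t ^ m) 0 = A x y / fact m * (deriv ^^ i) (\<lambda>t. t ^ m) 0"
    by (rule higher_deriv_cmult[where A = UNIV]) (auto intro!: holomorphic_intros)
  also have "(deriv ^^ i) (\<lambda>t. t ^ m) 0 = pochhammer (of_nat (Suc m - i)) i * (0 - 0) ^ (m - i)"
    using higher_deriv_power[of i 0 m 0] by simp
  finally show "deriv0 i (\<lambda>t. scale (t ^ m / fact m) A) x y = (if i = m then restr A else 0) x y"
    using assms by (auto simp: deriv0_def restr_def e pochhammer_fact[symmetric])
qed

lemma deriv0_mult_entry: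
  assumes F: "holo F" and G: "holo G" and x: "x \<in> cfg" and y: "y \<in> cfg"
  shows "deriv0 l (\<lambda>t. F t \<odot> G t) x y
    = (\<Sum>z\<in>cfg. \<Sum>p=0..l. of_nat (l choose p) * deriv0 p F x z * deriv0 (l - p) G z y)"
proof -
  have "deriv0 l (\<lambda>t. F t \<odot> G t) x y = (deriv ^^ l) (\<lambda>t. \<Sum>z\<in>cfg. F t x z * G t z y) 0"
    using x y by (simp add: deriv0_def restr_def mult_apply)
  also have "\<dots> = (\<Sum>z\<in>cfg. (deriv ^^ l) (\<lambda>t. F t x z * G t z y) 0)"
    using holoD[OF F x] holoD[OF G _ y] finite_cfg open_U zero_in_U
    by (intro higher_deriv_sum) (auto intro!: holomorphic_intros)
  also have "\<dots> = (\<Sum>z\<in>cfg. \<Sum>p=0..l. of_nat (l choose p) * deriv0 p F x z * deriv0 (l - p) G z y)"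
    using higher_deriv_mult[OF holoD[OF F x] holoD[OF G _ y] open_U zero_in_U] x y
    by (intro sum.cong) (simp_all add: deriv0_def restr_def)
  finally show ?thesis .
qed

lemma vanishes_to_mult_left:
  assumes F: "holo F" and E: "holo E" and v: "vanishes_to m E"
  shows "vanishes_to m (\<lambda>t. F t \<odot> E t)" and "deriv0 m (\<lambda>t. F t \<odot> E t) = F 0 \<odot> deriv0 m E"
proof -
  have E0: "deriv0 q E z y = 0" if "q < m" for q z y
    using v that unfolding vanishes_to_def by simp
  have single: "(\<Sum>p=0..l. of_nat (l choose p) * deriv0 p F x z * deriv0 (l - p) E z y)
      = (if l < m then 0 else deriv0 0 F x z * deriv0 m E z y)" if "l \<le> m" for l x z y
  proof -
    have "(\<Sum>p=0..l. of_nat (l choose p) * deriv0 p F x z * deriv0 (l - p) E z y)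
        = (\<Sum>p\<in>(if l < m then {} else {0}). of_nat (l choose p) * deriv0 p F x z * deriv0 (l - p) E z y)"
      using that by (intro sum.mono_neutral_right) (auto simp: E0)
    then show ?thesis
      using that by simp
  qed
  have "deriv0 l (\<lambda>t. F t \<odot> E t) = (if l < m then 0 else deriv0 0 F \<odot> deriv0 m E)" if "l \<le> m" for l
  proof (rule restr_ext)
    show "deriv0 l (\<lambda>t. F t \<odot> E t) x y = (if l < m then 0 else deriv0 0 F \<odot> deriv0 m E) x y"
      if "x \<in> cfg" "y \<in> cfg" for x y
      using that by (simp add: deriv0_mult_entry[OF F E] single[OF \<open>l \<le> m\<close>] mult_apply)
  qed simp_all
  then show "vanishes_to m (\<lambda>t. F t \<odot> E t)" and "deriv0 m (\<lambda>t. F t \<odot> E t) = F 0 \<odot> deriv0 m E"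
    unfolding vanishes_to_def by (auto simp: deriv0_0)
qed

lemma vanishes_to_mult_right:
  assumes F: "holo F" and E: "holo E" and v: "vanishes_to m E"
  shows "vanishes_to m (\<lambda>t. E t \<odot> F t)" and "deriv0 m (\<lambda>t. E t \<odot> F t) = deriv0 m E \<odot> F 0"
proof -
  have E0: "deriv0 q E x z = 0" if "q < m" for q x z
    using v that unfolding vanishes_to_def by simp
  have single: "(\<Sum>p=0..l. of_nat (l choose p) * deriv0 p E x z * deriv0 (l - p) F z y)
      = (if l < m then 0 else deriv0 m E x z * deriv0 0 F z y)" if "l \<le> m" for l x z y
  proof -
    have "(\<Sum>p=0..l. of_nat (l choose p) * deriv0 p E x z * deriv0 (l - p) F z y)
        = (\<Sum>p\<in>(if l < m then {} else {m}). of_nat (l choose p) * deriv0 p E x z * deriv0 (l - p) F z y)"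
      using that by (intro sum.mono_neutral_right) (auto simp: E0)
    then show ?thesis
      using that by simp
  qed
  have "deriv0 l (\<lambda>t. E t \<odot> F t) = (if l < m then 0 else deriv0 m E \<odot> deriv0 0 F)" if "l \<le> m" for l
  proof (rule restr_ext)
    show "deriv0 l (\<lambda>t. E t \<odot> F t) x y = (if l < m then 0 else deriv0 m E \<odot> deriv0 0 F) x y"
      if "x \<in> cfg" "y \<in> cfg" for x y
      using that by (simp add: deriv0_mult_entry[OF E F] single[OF \<open>l \<le> m\<close>] mult_apply)
  qed simp_all
  then show "vanishes_to m (\<lambda>t. E t \<odot> F t)" and "deriv0 m (\<lambda>t. E t \<odot> F t) = deriv0 m E \<odot> F 0"
    unfolding vanishes_to_def by (auto simp: deriv0_0)
qed

lemma vanishes_to_sandwich: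
  assumes "holo A" "holo E" "holo B" "vanishes_to m E"
  shows "vanishes_to m (\<lambda>t. A t \<odot> E t \<odot> B t)"
    and "deriv0 m (\<lambda>t. A t \<odot> E t \<odot> B t) = A 0 \<odot> deriv0 m E \<odot> B 0"
  using vanishes_to_mult_left[OF assms(1,2,4)] vanishes_to_mult_right[OF assms(3) holo_mult[OF assms(1,2)]]
  by simp_all

lemma vanishes_to_Suc_sandwich:
  assumes A: "holo A" and E: "holo E" and B: "holo B" and vE: "vanishes_to m E"
  shows "vanishes_to (Suc m) (\<lambda>t. A t \<odot> E t \<odot> B t - scale (t ^ m / fact m) (A 0 \<odot> deriv0 m E \<odot> B 0))"
  unfolding vanishes_to_def
proof (intro allI impI)
  fix i assume i: "i < Suc m"
  let ?P = "A 0 \<odot> deriv0 m E \<odot> B 0"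
  have "(\<lambda>t. t ^ m / fact m) holomorphic_on U"
    by (auto intro!: holomorphic_intros)
  then have "deriv0 i (\<lambda>t. A t \<odot> E t \<odot> B t - scale (t ^ m / fact m) ?P)
      = deriv0 i (\<lambda>t. A t \<odot> E t \<odot> B t) - (if i = m then ?P else 0)"
    using i by (simp add: deriv0_diff holo_mult A E B holo_scale deriv0_monomial)
  also have "\<dots> = 0"
    using i vanishes_to_sandwich[OF A E B vE] by (cases "i = m") (simp_all add: vanishes_to_def)
  finally show "deriv0 i (\<lambda>t. A t \<odot> E t \<odot> B t - scale (t ^ m / fact m) ?P) = 0" .
qed

lemma dderiv_mult:
  assumes F: "holo F" and G: "holo G" and t: "t \<in> U"
  shows "restr (dderiv (\<lambda>t. F t \<odot> G t) t) = dderiv F t \<odot> G t + F t \<odot> dderiv G t"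
proof (intro ext)
  fix x y
  show "restr (dderiv (\<lambda>t. F t \<odot> G t) t) x y = (dderiv F t \<odot> G t + F t \<odot> dderiv G t) x y"
  proof (cases "x \<in> cfg \<and> y \<in> cfg")
    case True
    then have x: "x \<in> cfg" and y: "y \<in> cfg" by auto
    have "((\<lambda>s. \<Sum>z\<in>cfg. F s x z * G s z y) has_field_derivative
        (\<Sum>z\<in>cfg. deriv (\<lambda>s. F s x z) t * G t z y + F t x z * deriv (\<lambda>s. G s z y) t)) (at t)"
    proof (rule DERIV_sum)
      fix z assume z: "z \<in> cfg"
      show "((\<lambda>s. F s x z * G s z y) has_field_derivative
          deriv (\<lambda>s. F s x z) t * G t z y + F t x z * deriv (\<lambda>s. G s z y) t) (at t)"
        using DERIV_mult[OF holomorphic_derivI[OF holoD[OF F x z] open_U t]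
            holomorphic_derivI[OF holoD[OF G z y] open_U t]]
        by (simp add: algebra_simps)
    qed
    then have "deriv (\<lambda>s. (F s \<odot> G s) x y) t =
        (\<Sum>z\<in>cfg. deriv (\<lambda>s. F s x z) t * G t z y + F t x z * deriv (\<lambda>s. G s z y) t)"
      using x y by (simp add: mult_apply DERIV_imp_deriv)
    then show ?thesis
      using x y by (simp add: restr_def dderiv_def mult_apply sum.distrib)
  qed (auto simp: restr_def mult_def)
qed

lemma trivial_on_deriv0:
  assumes "\<And>t. t \<in> U \<Longrightarrow> trivial_on T (F t)"
  shows "trivial_on T (deriv0 m F)"
  unfolding trivial_on_def
proof (intro ballI)
  fix x y assume x: "x \<in> cfg" and y: "y \<in> cfg"
  let ?P = "\<forall>i\<in>T. x i = y i" and ?x = "zero_on T x" and ?y = "zero_on T y"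
  have ev: "\<forall>\<^sub>F t in nhds 0. F t x y = (if ?P then F t ?x ?y else 0)"
    using eventually_nhds_in_open[OF open_U zero_in_U]
    by (rule eventually_mono) (rule trivial_onD[OF assms x y])
  have "(deriv ^^ m) (\<lambda>t. F t x y) 0 = (if ?P then (deriv ^^ m) (\<lambda>t. F t ?x ?y) 0 else 0)"
  proof (cases ?P)
    case True
    show ?thesis
      using ev unfolding if_P[OF True] by (simp add: higher_deriv_cong_ev)
  next
    case False
    show ?thesis
      using ev unfolding if_not_P[OF False] by (simp add: higher_deriv_cong_ev)
  qed
  then show "deriv0 m F x y = (if ?P then deriv0 m F ?x ?y else 0)"
    using x y zero_on_in_cfg by (simp add: deriv0_def restr_def)
qed

lemma trivial_on_dderiv:
  assumes "\<And>t. t \<in> U \<Longrightarrow> trivial_on T (F t)" "s \<in> U"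
  shows "trivial_on T (dderiv F s)"
  unfolding trivial_on_def
proof (intro ballI)
  fix x y assume x: "x \<in> cfg" and y: "y \<in> cfg"
  let ?P = "\<forall>i\<in>T. x i = y i" and ?x = "zero_on T x" and ?y = "zero_on T y"
  have ev: "\<forall>\<^sub>F t in nhds s. F t x y = (if ?P then F t ?x ?y else 0)"
    using eventually_nhds_in_open[OF open_U assms(2)]
    by (rule eventually_mono) (rule trivial_onD[OF assms(1) x y])
  show "dderiv F s x y = (if ?P then dderiv F s ?x ?y else 0)"
  proof (cases ?P)
    case True
    show ?thesis
      using ev unfolding if_P[OF True] by (simp add: dderiv_def deriv_cong_ev)
  next
    case False
    show ?thesis
      using ev unfolding if_not_P[OF False] by (simp add: dderiv_def deriv_cong_ev)
  qed
qed

lemma holo_factor_prod: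
  "(\<And>j. j \<in> set js \<Longrightarrow> holo (f j)) \<Longrightarrow> holo (factor_prod f js)"
proof (induction js)
  case Nil
  then show ?case
    by (simp add: holo_const)
next
  case (Cons j js)
  then have "holo (\<lambda>t. f j t \<odot> factor_prod f js t)"
    by (simp add: holo_mult)
  then show ?case
    by (rule holo_cong[rotated]) (simp add: restr_factor_prod_Cons)
qed

end

section \<open>Conjugating by factors that reduce to flips\<close>

context tensor_holo
begin

definition invertible_family :: "nat set \<Rightarrow> (complex \<Rightarrow> sop) \<Rightarrow> (complex \<Rightarrow> sop) \<Rightarrow> bool" where
  "invertible_family W F G \<longleftrightarrow> holo F \<and> holo G \<and>
     (\<forall>t\<in>U. G t \<odot> F t = one_op \<and> F t \<odot> G t = one_op
       \<and> trivial_on (S - W) (F t) \<and> trivial_on (S - W) (G t))"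

text \<open>Swap factors model \<open>R\<^sub>s\<^sub>j(t, 0)\<close>, which is the flip at \<open>t = 0\<close> by regularity.\<close>

definition swap_factor :: "nat \<Rightarrow> nat \<Rightarrow> (complex \<Rightarrow> sop) \<Rightarrow> (complex \<Rightarrow> sop) \<Rightarrow> bool" where
  "swap_factor s j F G \<longleftrightarrow> invertible_family {s, j} F G
     \<and> restr (F 0) = restr (swap_op s j) \<and> restr (G 0) = restr (swap_op s j)"

lemma invertible_family_mono:
  "invertible_family W F G \<Longrightarrow> W \<subseteq> W' \<Longrightarrow> invertible_family W' F G"
  unfolding invertible_family_def by (meson Diff_mono order_refl trivial_on_subset)

lemma invertible_family_factor_prod:
  assumes "\<And>j. j \<in> set js \<Longrightarrow> invertible_family W (f j) (g j)"
  shows "invertible_family W (factor_prod f js) (factor_prod g (rev js))"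
  unfolding invertible_family_def
proof (intro conjI ballI)
  show "holo (factor_prod f js)" "holo (factor_prod g (rev js))"
    using assms by (auto simp: invertible_family_def intro!: holo_factor_prod)
  fix t assume "t \<in> U"
  then show "factor_prod g (rev js) t \<odot> factor_prod f js t = one_op"
    "factor_prod f js t \<odot> factor_prod g (rev js) t = one_op"
    "trivial_on (S - W) (factor_prod f js t)" "trivial_on (S - W) (factor_prod g (rev js) t)"
    using assms factor_prod_inverse[of js g t f] trivial_on_factor_prod[of js "S - W" f t]
      trivial_on_factor_prod[of "rev js" "S - W" g t]
    by (auto simp: invertible_family_def)
qed

lemma invertible_family_factor_prod_slots:
  assumes "\<And>j. j \<in> set js \<Longrightarrow> invertible_family {s, j} (f j) (g j)"
  shows "invertible_family (insert s (set js)) (factor_prod f js) (factor_prod g (rev js))"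
proof (rule invertible_family_factor_prod)
  fix j assume "j \<in> set js"
  then show "invertible_family (insert s (set js)) (f j) (g j)"
    using assms by (blast intro: invertible_family_mono)
qed

lemma invertible_family_at:
  assumes "invertible_family W F G" "t \<in> U"
  shows "invertible_op (F t)" and "conjugate (F t) X = G t \<odot> X \<odot> F t"
    and "log_deriv F t = G t \<odot> dderiv F t"
proof -
  have inv: "F t \<odot> G t = one_op" "G t \<odot> F t = one_op"
    using assms unfolding invertible_family_def by auto
  then show "invertible_op (F t)"
    unfolding invertible_op_def by blast
  show "conjugate (F t) X = G t \<odot> X \<odot> F t" "log_deriv F t = G t \<odot> dderiv F t"
    unfolding conjugate_def log_deriv_def by (metis opinv_unique[OF inv] mult_restr_left)+
qed

lemma holo_log_deriv: "invertible_family W F G \<Longrightarrow> holo (log_deriv F)"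
  by (rule holo_cong[of "\<lambda>t. G t \<odot> dderiv F t"])
    (auto simp: invertible_family_at invertible_family_def intro: holo_mult holo_dderiv)

lemma holo_conjugate:
  "invertible_family W F G \<Longrightarrow> holo X \<Longrightarrow> holo (\<lambda>t. conjugate (F t) (X t))"
  by (rule holo_cong[of "\<lambda>t. G t \<odot> X t \<odot> F t"])
    (auto simp: invertible_family_at invertible_family_def intro: holo_mult)

lemma trivial_on_log_deriv:
  assumes "invertible_family W F G" "t \<in> U"
  shows "trivial_on (S - W) (log_deriv F t)"
proof -
  have "trivial_on (S - W) (G t)" "\<And>t. t \<in> U \<Longrightarrow> trivial_on (S - W) (F t)"
    using assms unfolding invertible_family_def by auto
  then show ?thesis
    using trivial_on_mult[OF _ trivial_on_dderiv[OF _ assms(2)]] invertible_family_at(3)[OF assms] by simp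
qed

text \<open>The invariant of successive conjugations by swap factors: each one raises the order of
  vanishing of \<open>E\<close> by one, at the price of one slot of \<open>T\<close>.\<close>

definition swap_split :: "nat \<Rightarrow> nat set \<Rightarrow> nat \<Rightarrow> (complex \<Rightarrow> sop) \<Rightarrow> bool" where
  "swap_split s T m Z \<longleftrightarrow> (\<exists>Y E. holo Y \<and> holo E \<and> vanishes_to m E \<and>
     (\<forall>t\<in>U. restr (Z t) = restr (Y t + E t) \<and> trivial_on (insert s T) (Y t) \<and> trivial_on T (Z t)))"

lemma swap_split_init:
  assumes "holo L" "\<And>t. t \<in> U \<Longrightarrow> trivial_on T (L t)"
  shows "swap_split s T 0 L"
  unfolding swap_split_def
  using assms holo_const trivial_on_zero by (intro exI[of _ "\<lambda>t. 0"] exI[of _ L]) (simp add: vanishes_to_def)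

lemma swap_split_mono: "swap_split s T m' Z \<Longrightarrow> m \<le> m' \<Longrightarrow> swap_split s T m Z"
  unfolding swap_split_def vanishes_to_def by (meson order_less_le_trans)

lemma swap_split_cong:
  "swap_split s T m Z \<Longrightarrow> (\<And>t. t \<in> U \<Longrightarrow> restr (Z t) = restr (Z' t)) \<Longrightarrow> swap_split s T m Z'"
  unfolding swap_split_def by (metis trivial_on_restr)

text \<open>The order-\<open>m\<close> part of \<open>E\<close> is transported by the flip to a term that no longer acts on \<open>s\<close>,
  so it can be moved into \<open>Y\<close> as a monomial, leaving a remainder of order \<open>m + 1\<close>.\<close>

lemma swap_split_step:
  assumes s: "s \<in> S" and j: "j \<in> S" and sj: "s \<noteq> j" and sT: "s \<notin> T" and jT: "j \<notin> T"
    and TS: "T \<subseteq> S" and factor: "swap_factor s j F G" and split: "swap_split s (insert j T) m Z"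
  shows "swap_split s T (Suc m) (\<lambda>t. G t \<odot> Z t \<odot> F t)"
proof -
  obtain Y E where hY: "holo Y" and hE: "holo E" and vE: "vanishes_to m E"
    and ZYE: "\<And>t. t \<in> U \<Longrightarrow> restr (Z t) = restr (Y t + E t)"
    and aY: "\<And>t. t \<in> U \<Longrightarrow> trivial_on (insert s (insert j T)) (Y t)"
    and aZ: "\<And>t. t \<in> U \<Longrightarrow> trivial_on (insert j T) (Z t)"
    using split unfolding swap_split_def by blast
  have hF: "holo F" and hG: "holo G" and inv: "\<And>t. t \<in> U \<Longrightarrow> G t \<odot> F t = one_op"
    and aF: "\<And>t. t \<in> U \<Longrightarrow> trivial_on (S - {s, j}) (F t)"
    and aG: "\<And>t. t \<in> U \<Longrightarrow> trivial_on (S - {s, j}) (G t)"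
    and F0: "restr (F 0) = restr (swap_op s j)" and G0: "restr (G 0) = restr (swap_op s j)"
    using factor unfolding swap_factor_def invertible_family_def by auto
  define P where "P = G 0 \<odot> deriv0 m E \<odot> F 0"
  have "holo (\<lambda>t. Y t + scale (t ^ m / fact m) P)"
    using hY by (intro holo_add holo_scale) (auto intro!: holomorphic_intros)
  moreover have "vanishes_to (Suc m) (\<lambda>t. G t \<odot> E t \<odot> F t - scale (t ^ m / fact m) P)"
    and "holo (\<lambda>t. G t \<odot> E t \<odot> F t - scale (t ^ m / fact m) P)"
    unfolding P_def using vanishes_to_Suc_sandwich[OF hG hE hF vE]
    by (auto intro!: holo_diff holo_mult hG hE hF holo_scale holomorphic_intros)
  moreover have "restr (G t \<odot> Z t \<odot> F t)
      = restr ((Y t + scale (t ^ m / fact m) P) + (G t \<odot> E t \<odot> F t - scale (t ^ m / fact m) P))"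
    if t: "t \<in> U" for t
  proof -
    have "trivial_on {s, j} (Y t)"
      using trivial_on_subset[OF _ aY[OF t]] by auto
    then show ?thesis
      using conj_split[OF _ _ inv[OF t] ZYE[OF t]] aF[OF t] by simp
  qed
  moreover have "trivial_on (insert s T) (Y t + scale (t ^ m / fact m) P)" if t: "t \<in> U" for t
  proof -
    have "trivial_on (insert j T) (E t')" if t': "t' \<in> U" for t'
    proof -
      have "restr (E t') = restr (Z t' - Y t')"
        using ZYE[OF t'] by (simp add: algebra_simps)
      moreover have "trivial_on (insert j T) (Z t' - Y t')"
        using trivial_on_diff[OF aZ[OF t'] trivial_on_subset[OF subset_insertI aY[OF t']]] .
      ultimately show ?thesis
        by (metis trivial_on_restr)
    qed
    then have "trivial_on (insert s T) P"
      unfolding P_def using trivial_on_swap[OF s j sj sT jT trivial_on_deriv0]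
      by (metis F0 G0 mult_restr_left mult_restr_right)
    then show ?thesis
      using trivial_on_subset[OF _ aY[OF t]] by (intro trivial_on_add trivial_on_scale) auto
  qed
  moreover have "trivial_on T (G t \<odot> Z t \<odot> F t)" if t: "t \<in> U" for t
  proof -
    have "T \<subseteq> S - {s, j}" "T \<subseteq> insert j T"
      using TS sT jT by auto
    then show ?thesis
      using aG[OF t] aZ[OF t] aF[OF t] by (blast intro: trivial_on_mult trivial_on_subset)
  qed
  ultimately show ?thesis
    unfolding swap_split_def by blast
qed

fun conj_chain ::
  "(nat \<Rightarrow> complex \<Rightarrow> sop) \<Rightarrow> (nat \<Rightarrow> complex \<Rightarrow> sop) \<Rightarrow> (complex \<Rightarrow> sop) \<Rightarrow> nat list \<Rightarrow> complex \<Rightarrow> sop"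
where
  "conj_chain f g L [] = L"
| "conj_chain f g L (j # js) = (\<lambda>t. g j t \<odot> conj_chain f g L js t \<odot> f j t)"

lemma swap_split_conj_chain:
  assumes s: "s \<in> S" and TS: "T \<subseteq> S" and sT: "s \<notin> T"
    and L: "holo L" "\<And>t. t \<in> U \<Longrightarrow> trivial_on T (L t)"
  shows "distinct js \<Longrightarrow> set js \<subseteq> T \<Longrightarrow> (\<And>j. j \<in> set js \<Longrightarrow> swap_factor s j (f j) (g j)) \<Longrightarrow>
    swap_split s (T - set js) (length js) (conj_chain f g L js)"
proof (induction js)
  case Nil
  show ?case
    using swap_split_init[OF L] by simp
next
  case (Cons j js)
  have "swap_split s (T - set (j # js)) (Suc (length js)) (\<lambda>t. g j t \<odot> conj_chain f g L js t \<odot> f j t)"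
  proof (rule swap_split_step[OF s])
    show "j \<in> S" "s \<noteq> j" "s \<notin> T - set (j # js)" "j \<notin> T - set (j # js)" "T - set (j # js) \<subseteq> S"
      using Cons.prems TS sT by auto
    show "swap_factor s j (f j) (g j)"
      using Cons.prems by simp
    have "insert j (T - set (j # js)) = T - set js"
      using Cons.prems by auto
    then show "swap_split s (insert j (T - set (j # js))) (length js) (conj_chain f g L js)"
      using Cons by simp
  qed
  then show ?case
    by simp
qed

lemma conj_chain_eq:
  "restr (conj_chain f g L js t) = factor_prod g js t \<odot> L t \<odot> factor_prod f (rev js) t"
proof (induction js)
  case (Cons j js)
  have "restr (conj_chain f g L (j # js) t) = g j t \<odot> restr (conj_chain f g L js t) \<odot> f j t"
    by simp
  also have "\<dots> = g j t \<odot> factor_prod g js t \<odot> L t \<odot> (factor_prod f (rev js) t \<odot> f j t)"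
    unfolding Cons by (simp add: mult_assoc)
  also have "\<dots> = factor_prod g (j # js) t \<odot> L t \<odot> factor_prod f (rev (j # js)) t"
    using restr_factor_prod_Cons[of g j js t] restr_factor_prod_snoc[of f "rev js" j t]
    by (metis mult_restr_left mult_restr_right rev.simps(2))
  finally show ?case .
qed simp

lemma swap_split_conjugate_factor_prod:
  assumes s: "s \<in> S" and TS: "T \<subseteq> S" and sT: "s \<notin> T"
    and L: "holo L" "\<And>t. t \<in> U \<Longrightarrow> trivial_on T (L t)"
    and c: "distinct c" "set c \<subseteq> T" and swap: "\<And>j. j \<in> set c \<Longrightarrow> swap_factor s j (f j) (g j)"
  shows "swap_split s (T - set c) (length c) (\<lambda>t. conjugate (factor_prod f c t) (L t))"
proof (rule swap_split_cong)
  show "swap_split s (T - set c) (length c) (conj_chain f g L (rev c))"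
    using swap_split_conj_chain[OF s TS sT L, of "rev c" f g] c swap by simp
  have "invertible_family (insert s (set c)) (factor_prod f c) (factor_prod g (rev c))"
    using swap by (intro invertible_family_factor_prod_slots) (simp add: swap_factor_def)
  then show "restr (conj_chain f g L (rev c) t) = restr (conjugate (factor_prod f c t) (L t))"
    if "t \<in> U" for t
    using that by (simp add: conj_chain_eq invertible_family_at)
qed

lemma deriv0_conjugate_swap_split:
  assumes split: "swap_split s T m Z" and P: "invertible_family W P Pinv" and W: "W \<subseteq> insert s T"
  shows "deriv0 m (\<lambda>t. conjugate (P t) (Z t)) = conjugate (P 0) (deriv0 m Z)"
proof -
  obtain Y E where hY: "holo Y" and hE: "holo E" and vE: "vanishes_to m E"
    and ZYE: "\<And>t. t \<in> U \<Longrightarrow> restr (Z t) = restr (Y t + E t)"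
    and aY: "\<And>t. t \<in> U \<Longrightarrow> trivial_on (insert s T) (Y t)"
    using split unfolding swap_split_def by blast
  have hP: "holo P" "holo Pinv" and inv: "\<And>t. t \<in> U \<Longrightarrow> Pinv t \<odot> P t = one_op"
    and aP: "\<And>t. t \<in> U \<Longrightarrow> trivial_on (S - insert s T) (P t)"
    using P W unfolding invertible_family_def by (auto intro: trivial_on_subset[rotated])
  have conj: "conjugate (P t) X = Pinv t \<odot> X \<odot> P t" if "t \<in> U" for t X
    using invertible_family_at(2)[OF P that] .
  have "deriv0 m (\<lambda>t. conjugate (P t) (Z t)) = deriv0 m (\<lambda>t. restr (Y t) + Pinv t \<odot> E t \<odot> P t)"
    by (rule deriv0_cong) (simp add: conj conj_split[OF aY aP inv ZYE])
  also have "\<dots> = deriv0 m Y + Pinv 0 \<odot> deriv0 m E \<odot> P 0"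
    using deriv0_add[OF holo_restr[OF hY] holo_mult[OF holo_mult[OF hP(2) hE] hP(1)]]
      vanishes_to_sandwich(2)[OF hP(2) hE hP(1) vE] by simp
  also have "deriv0 m Y = Pinv 0 \<odot> deriv0 m Y \<odot> P 0"
    using conj_trivial_on[OF trivial_on_deriv0[OF aY] aP[OF zero_in_U] inv[OF zero_in_U]] by simp
  also have "Pinv 0 \<odot> deriv0 m Y \<odot> P 0 + Pinv 0 \<odot> deriv0 m E \<odot> P 0 = Pinv 0 \<odot> deriv0 m (\<lambda>t. Y t + E t) \<odot> P 0"
    by (simp add: deriv0_add[OF hY hE] mult_add_left mult_add_right)
  also have "deriv0 m (\<lambda>t. Y t + E t) = deriv0 m Z"
    by (rule deriv0_cong) (simp add: ZYE)
  finally show ?thesis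
    using conj[OF zero_in_U] by simp
qed

end

section \<open>Logarithmic derivatives of ordered products\<close>

context tensor_holo
begin

lemma log_deriv_cong:
  assumes "\<And>t. t \<in> U \<Longrightarrow> restr (F t) = restr (G t)" "t \<in> U"
  shows "log_deriv F t = log_deriv G t"
proof -
  have "opinv S n (F t) = opinv S n (restr (F t))"
    by simp
  also have "\<dots> = opinv S n (G t)"
    by (simp only: assms(1)[OF assms(2)] opinv_restr)
  finally have "opinv S n (F t) = opinv S n (G t)" .
  moreover have "restr (dderiv F t) = restr (dderiv G t)"
    by (rule dderiv_cong[OF assms])
  ultimately show ?thesis
    unfolding log_deriv_def by (metis mult_restr_right)
qed

lemma deriv0_log_deriv_cong:
  assumes "\<And>t. restr (F t) = restr (G t)"
  shows "deriv0 m (log_deriv F) = deriv0 m (log_deriv G)"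
proof (rule deriv0_cong)
  fix t assume "t \<in> U"
  then have "log_deriv F t = log_deriv G t"
    by (intro log_deriv_cong assms)
  then show "restr (log_deriv F t) = restr (log_deriv G t)"
    by simp
qed

lemma log_deriv_mult:
  assumes A: "holo A" and B: "holo B" and t: "t \<in> U"
    and invA: "invertible_op (A t)" and invB: "invertible_op (B t)"
  shows "log_deriv (\<lambda>t. A t \<odot> B t) t = conjugate (B t) (log_deriv A t) + log_deriv B t"
proof -
  let ?Ai = "opinv S n (A t)" and ?Bi = "opinv S n (B t)"
  have "log_deriv (\<lambda>t. A t \<odot> B t) t
      = restr (opinv S n (A t \<odot> B t)) \<odot> restr (dderiv (\<lambda>t. A t \<odot> B t) t)"
    by (simp add: log_deriv_def)
  also have "\<dots> = ?Bi \<odot> ?Ai \<odot> (dderiv A t \<odot> B t + A t \<odot> dderiv B t)"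
    using invertible_op_mult(2)[OF invA invB] dderiv_mult[OF A B t] by simp
  also have "\<dots> = ?Bi \<odot> (?Ai \<odot> dderiv A t) \<odot> B t + ?Bi \<odot> (?Ai \<odot> A t) \<odot> dderiv B t"
    by (simp only: mult_add_right mult_assoc)
  finally show ?thesis
    by (simp add: invertible_opD(2)[OF invA] conjugate_def log_deriv_def)
qed

lemma log_deriv_factor_prod_append:
  assumes "invertible_family W (factor_prod f xs) G" "invertible_family W' (factor_prod f ys) G'" "t \<in> U"
  shows "log_deriv (factor_prod f (xs @ ys)) t
    = conjugate (factor_prod f ys t) (log_deriv (factor_prod f xs) t) + log_deriv (factor_prod f ys) t"
proof -
  have "log_deriv (factor_prod f (xs @ ys)) t = log_deriv (\<lambda>t. factor_prod f xs t \<odot> factor_prod f ys t) t"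
    by (intro log_deriv_cong assms(3)) (simp add: restr_factor_prod_append)
  also have "\<dots> = conjugate (factor_prod f ys t) (log_deriv (factor_prod f xs) t) + log_deriv (factor_prod f ys) t"
    using assms by (intro log_deriv_mult) (auto simp: invertible_family_def invertible_family_at)
  finally show ?thesis .
qed

text \<open>In the first term the \<open>m\<close>-th derivative commutes with the outer conjugation by \<open>P\<^sub>q\<close>:
  conjugating by the swap factors of \<open>P\<^sub>c\<close> moves everything that is not \<open>O(t\<^sup>m)\<close> off the slots
  of \<open>P\<^sub>q\<close>.\<close>

lemma deriv0_log_deriv_factor_prod:
  assumes s: "s \<in> S" and dist: "distinct (p @ c @ q)" and slots: "set (p @ c @ q) \<subseteq> S - {s}"
    and factors: "\<And>j. j \<in> set (p @ q) \<Longrightarrow> invertible_family {s, j} (f j) (g j)"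
    and swap: "\<And>j. j \<in> set c \<Longrightarrow> swap_factor s j (f j) (g j)"
    and m: "m \<le> length c"
  shows "deriv0 m (log_deriv (factor_prod f (p @ c @ q))) =
      conjugate (factor_prod f q 0) (deriv0 m (\<lambda>t. conjugate (factor_prod f c t) (log_deriv (factor_prod f p) t)))
    + deriv0 m (\<lambda>t. conjugate (factor_prod f q t) (log_deriv (factor_prod f c) t))
    + deriv0 m (log_deriv (factor_prod f q))"
proof -
  let ?P = "factor_prod f"
  have fam: "invertible_family (insert s (set xs)) (?P xs) (factor_prod g (rev xs))"
    if "set xs \<subseteq> set (p @ c @ q)" for xs
    using that factors swap by (intro invertible_family_factor_prod_slots) (auto simp: swap_factor_def)
  have hol: "holo (log_deriv (?P xs))" if "xs \<in> {p, c, q}" for xs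
    using holo_log_deriv[OF fam] that by auto
  define T1 where "T1 t = conjugate (?P q t) (conjugate (?P c t) (log_deriv (?P p) t))" for t
  define T2 where "T2 t = conjugate (?P q t) (log_deriv (?P c) t)" for t
  have hT: "holo T1" "holo T2"
    unfolding T1_def T2_def by (intro holo_conjugate[OF fam] hol; auto)+
  have "log_deriv (?P (p @ c @ q)) t = T1 t + T2 t + log_deriv (?P q) t" if t: "t \<in> U" for t
  proof -
    have "log_deriv (?P ((p @ c) @ q)) t = conjugate (?P q t) (log_deriv (?P (p @ c)) t) + log_deriv (?P q) t"
      by (rule log_deriv_factor_prod_append[OF fam fam t]) auto
    moreover have "log_deriv (?P (p @ c)) t = conjugate (?P c t) (log_deriv (?P p) t) + log_deriv (?P c) t"
      by (rule log_deriv_factor_prod_append[OF fam fam t]) auto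
    ultimately show ?thesis
      by (simp only: append_assoc T1_def T2_def conjugate_add)
  qed
  then have "deriv0 m (log_deriv (?P (p @ c @ q))) = deriv0 m (\<lambda>t. T1 t + T2 t + log_deriv (?P q) t)"
    by (intro deriv0_cong) simp
  also have "\<dots> = deriv0 m T1 + deriv0 m T2 + deriv0 m (log_deriv (?P q))"
    using hT hol[of q] by (simp add: deriv0_add holo_add)
  also have "deriv0 m T1 = conjugate (?P q 0) (deriv0 m (\<lambda>t. conjugate (?P c t) (log_deriv (?P p) t)))"
    unfolding T1_def
  proof (rule deriv0_conjugate_swap_split)
    define T where "T = S - insert s (set p)"
    have "swap_split s (T - set c) (length c) (\<lambda>t. conjugate (?P c t) (log_deriv (?P p) t))"
    proof (rule swap_split_conjugate_factor_prod[OF s, where g = g])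
      show "T \<subseteq> S" "s \<notin> T" "distinct c" "set c \<subseteq> T"
        using dist slots by (auto simp: T_def)
      show "holo (log_deriv (?P p))"
        by (rule hol) simp
      show "trivial_on T (log_deriv (?P p) t)" if "t \<in> U" for t
        unfolding T_def using trivial_on_log_deriv[OF fam[of p] that] by simp
    qed (rule swap)
    then show "swap_split s (T - set c) m (\<lambda>t. conjugate (?P c t) (log_deriv (?P p) t))"
      using m by (rule swap_split_mono)
    show "invertible_family (insert s (set q)) (?P q) (factor_prod g (rev q))"
      by (rule fam) auto
    show "insert s (set q) \<subseteq> insert s (T - set c)"
      using dist slots by (auto simp: T_def)
  qed
  finally show ?thesis
    unfolding T2_def .
qed

lemma log_deriv_difference:
  assumes "s \<in> S" "distinct (p @ c @ q)" "set (p @ c @ q) \<subseteq> S - {s}"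
    and "\<And>j. j \<in> set (p @ q) \<Longrightarrow> invertible_family {s, j} (f j) (g j)"
    and "\<And>j. j \<in> set c \<Longrightarrow> swap_factor s j (f j) (g j)"
    and "m \<le> length c"
  defines "X \<equiv> \<lambda>p q. deriv0 m (log_deriv (factor_prod f (p @ c @ q)))"
  shows "X p q - conjugate (factor_prod f q 0) (X p []) = X [] q - conjugate (factor_prod f q 0) (X [] [])"
proof -
  have "X p' q' =
      conjugate (factor_prod f q' 0) (deriv0 m (\<lambda>t. conjugate (factor_prod f c t) (log_deriv (factor_prod f p') t)))
    + deriv0 m (\<lambda>t. conjugate (factor_prod f q' t) (log_deriv (factor_prod f c) t))
    + deriv0 m (log_deriv (factor_prod f q'))"
    if "p' \<in> {p, []}" "q' \<in> {q, []}" for p' q'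
    unfolding X_def using that assms by (intro deriv0_log_deriv_factor_prod) auto
  then show ?thesis
    by (simp add: conjugate_add conjugate_diff)
qed

end

section \<open>The R-matrix factors\<close>

context tensor_ops
begin

lemma restr_RIJ_left: "restr (RIJ R S n [s] J w) = restr (opprod S n (map (\<lambda>j. Rop R s j w) (rev J)))"
  unfolding RIJ_def by (simp add: restr_opprod_single)

lemma restr_RIJ_right: "restr (RIJ R S n I [s] w) = restr (opprod S n (map (\<lambda>i. Rop R i s w) I))"
  unfolding RIJ_def by (rule restr_opprod_cong) (simp add: restr_opprod_single)

lemma restr_conjop: "restr (conjop S n A X) = conjugate A X"
proof -
  have "restr (conjop S n A X) = opmul S n (opinv S n A) X \<odot> A"
    by (simp add: conjop_def mult_def)
  also have "\<dots> = conjugate A X"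
    unfolding conjugate_def by (metis mult_def mult_restr_left)
  finally show ?thesis .
qed

lemma sum_two_slots:
  assumes i: "i \<in> S" and j: "j \<in> S" and ij: "i \<noteq> j" and x: "x \<in> cfg"
  shows "(\<Sum>z\<in>cfg. if \<forall>l. l \<noteq> i \<longrightarrow> l \<noteq> j \<longrightarrow> x l = z l then h z else 0)
       = (\<Sum>c<n. \<Sum>e<n. h (x(i := c, j := e)))"
proof -
  define g where "g = (\<lambda>(c, e). x(i := c, j := e))"
  define Z where "Z = {z \<in> cfg. \<forall>l. l \<noteq> i \<longrightarrow> l \<noteq> j \<longrightarrow> x l = z l}"
  have "inj_on g ({..<n} \<times> {..<n})"
    unfolding inj_on_def g_def
  proof (clarify)
    fix c e c' e' assume "x(i := c, j := e) = x(i := c', j := e')"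
    then have "c = c'" "e = e'"
      using fun_cong[of _ _ i] fun_cong[of _ _ j] ij by (metis fun_upd_other fun_upd_same)+
    then show "c = c' \<and> e = e'" ..
  qed
  moreover have "g ` ({..<n} \<times> {..<n}) = Z"
  proof
    show "g ` ({..<n} \<times> {..<n}) \<subseteq> Z"
      using x i j by (auto simp: g_def Z_def cfgs_def)
    show "Z \<subseteq> g ` ({..<n} \<times> {..<n})"
    proof
      fix z assume z: "z \<in> Z"
      then have "z = g (z i, z j)" "(z i, z j) \<in> {..<n} \<times> {..<n}"
        using ij i j by (auto simp: g_def Z_def cfgs_def fun_eq_iff)
      then show "z \<in> g ` ({..<n} \<times> {..<n})" by blast
    qed
  qed
  ultimately have "(\<Sum>z\<in>Z. h z) = (\<Sum>p\<in>{..<n} \<times> {..<n}. h (g p))"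
    by (metis sum.reindex_cong)
  moreover have "(\<Sum>z\<in>cfg. if \<forall>l. l \<noteq> i \<longrightarrow> l \<noteq> j \<longrightarrow> x l = z l then h z else 0) = (\<Sum>z\<in>Z. h z)"
    unfolding Z_def using finite_cfg by (simp add: sum.inter_filter)
  ultimately show ?thesis
    by (simp add: g_def sum.cartesian_product case_prod_unfold)
qed

lemma opmul_Rop_Rop:
  assumes i: "i \<in> S" and j: "j \<in> S" and ij: "i \<noteq> j" and x: "x \<in> cfg"
  shows "opmul S n (Rop R i j w) (Rop R j i w) x y =
    (if \<forall>l. l \<noteq> i \<longrightarrow> l \<noteq> j \<longrightarrow> x l = y l
     then \<Sum>c<n. \<Sum>e<n. R (w i) (w j) (x i, x j) (c, e) * R (w j) (w i) (e, c) (y j, y i) else 0)"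
proof -
  let ?off = "\<lambda>z. \<forall>l. l \<noteq> i \<longrightarrow> l \<noteq> j \<longrightarrow> z l = y l"
  define h where "h z = R (w i) (w j) (x i, x j) (z i, z j) *
     (R (w j) (w i) (z j, z i) (y j, y i) * (if ?off z then 1 else 0))" for z
  have "opmul S n (Rop R i j w) (Rop R j i w) x y =
      (\<Sum>z\<in>cfg. if \<forall>l. l \<noteq> i \<longrightarrow> l \<noteq> j \<longrightarrow> x l = z l then h z else 0)"
    unfolding opmul_def Rop_def h_def by (rule sum.cong) (auto simp: conj_commute)
  also have "\<dots> = (\<Sum>c<n. \<Sum>e<n. h (x(i := c, j := e)))"
    by (rule sum_two_slots[OF i j ij x])
  also have "\<dots> = (\<Sum>c<n. \<Sum>e<n. (if ?off x then 1 else 0) *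
      (R (w i) (w j) (x i, x j) (c, e) * R (w j) (w i) (e, c) (y j, y i)))"
  proof -
    have "?off (x(i := c, j := e)) \<longleftrightarrow> ?off x" for c e
      by auto
    then show ?thesis
      unfolding h_def using ij by (simp add: mult_ac)
  qed
  also have "\<dots> = (if ?off x
      then \<Sum>c<n. \<Sum>e<n. R (w i) (w j) (x i, x j) (c, e) * R (w j) (w i) (e, c) (y j, y i) else 0)"
    by (cases "?off x") auto
  finally show ?thesis .
qed

lemma Rop_mult_Rop:
  assumes i: "i \<in> S" and j: "j \<in> S" and ij: "i \<noteq> j"
    and unitary: "\<And>a b a' b'. a < n \<Longrightarrow> b < n \<Longrightarrow> a' < n \<Longrightarrow> b' < n \<Longrightarrow>
       (\<Sum>c<n. \<Sum>e<n. R (w i) (w j) (a, b) (c, e) * R (w j) (w i) (e, c) (b', a')) = (if a = a' \<and> b = b' then 1 else 0)"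
  shows "Rop R i j w \<odot> Rop R j i w = one_op"
proof (rule restr_ext)
  fix x y assume x: "x \<in> cfg" and y: "y \<in> cfg"
  have "x i < n" "x j < n" "y i < n" "y j < n"
    using x y i j by (auto simp: cfgs_def)
  moreover have "(\<forall>l. l \<noteq> i \<longrightarrow> l \<noteq> j \<longrightarrow> x l = y l) \<and> x i = y i \<and> x j = y j \<longleftrightarrow> x = y"
    by (auto simp: fun_eq_iff)
  ultimately show "(Rop R i j w \<odot> Rop R j i w) x y = one_op x y"
    using opmul_Rop_Rop[OF i j ij x, of R w y] unitary x y
    by (auto simp: mult_def restr_def one_op_def opid_def)
qed (simp_all add: one_op_def)

lemma restr_Rop_flip:
  assumes i: "i \<in> S" and j: "j \<in> S" and ij: "i \<noteq> j" and wi: "w i = 0" and wj: "w j = 0"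
    and regular: "\<And>p q. fst p < n \<Longrightarrow> snd p < n \<Longrightarrow> fst q < n \<Longrightarrow> snd q < n \<Longrightarrow>
      R 0 0 p q = (if fst p = snd q \<and> snd p = fst q then 1 else 0)"
  shows "restr (Rop R i j w) = restr (swap_op i j)"
proof (intro ext)
  fix x y
  show "restr (Rop R i j w) x y = restr (swap_op i j) x y"
  proof (cases "x \<in> cfg \<and> y \<in> cfg")
    case True
    then have "x i < n" "x j < n" "y i < n" "y j < n"
      using i j by (auto simp: cfgs_def)
    moreover have "(x i = y j \<and> x j = y i) \<and> (\<forall>l. l \<noteq> i \<longrightarrow> l \<noteq> j \<longrightarrow> x l = y l) \<longleftrightarrow> y = swap_slots i j x"
      using ij by (auto simp: swap_slots_def fun_eq_iff)
    ultimately show ?thesis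
      using True regular[of "(x i, x j)" "(y i, y j)"] by (auto simp: restr_def Rop_def swap_op_def wi wj)
  qed (auto simp: restr_def)
qed

lemma trivial_on_Rop: "trivial_on (S - {i, j}) (Rop R i j w)"
  unfolding trivial_on_def
proof (intro ballI)
  fix x y assume x: "x \<in> cfg" and y: "y \<in> cfg"
  have out: "\<And>l. l \<notin> S \<Longrightarrow> x l = 0 \<and> y l = 0"
    using x y by (auto simp: cfgs_def)
  have "(\<forall>l. l \<noteq> i \<longrightarrow> l \<noteq> j \<longrightarrow> x l = y l) \<longleftrightarrow> (\<forall>l\<in>S - {i, j}. x l = y l)"
  proof
    assume S: "\<forall>l\<in>S - {i, j}. x l = y l"
    show "\<forall>l. l \<noteq> i \<longrightarrow> l \<noteq> j \<longrightarrow> x l = y l"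
    proof (intro allI impI)
      fix l assume "l \<noteq> i" "l \<noteq> j"
      then show "x l = y l"
        using S out by (cases "l \<in> S") auto
    qed
  qed auto
  moreover have "\<forall>l. l \<noteq> i \<longrightarrow> l \<noteq> j \<longrightarrow> zero_on (S - {i, j}) x l = zero_on (S - {i, j}) y l"
    using out by (auto simp: zero_on_def)
  ultimately show "Rop R i j w x y = (if \<forall>l\<in>S - {i, j}. x l = y l
      then Rop R i j w (zero_on (S - {i, j}) x) (zero_on (S - {i, j}) y) else 0)"
    unfolding Rop_def by (simp add: zero_on_def)
qed

end

lemma shift_shift: "shift (shift u I t) I s = shift u I (t + s)"
  by (auto simp: shift_def fun_eq_iff)

lemma shift_0 [simp]: "shift u I 0 = u"
  by (auto simp: shift_def fun_eq_iff)

context tensor_holo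
begin

lemma restr_DD: "restr (DD K m Phi u) = deriv0 m (\<lambda>t. Phi (shift u K t))"
  by (simp add: DD_def deriv0_def)

lemma DD_1_shift: "DD K 1 Phi (shift u K t) = dderiv (\<lambda>s. Phi (shift u K s)) t"
proof -
  have "deriv (\<lambda>s. Phi (shift u K (t + s)) x y) 0 = deriv (\<lambda>s. Phi (shift u K s) x y) t" for x y
    using deriv_shift_0[of "\<lambda>s. Phi (shift u K s) x y" t] by (simp add: o_def)
  then show ?thesis
    unfolding DD_def dderiv_def by (simp add: shift_shift)
qed

lemma restr_Qk: "restr (Qk R S n k I J u) = deriv0 (k - 2) (log_deriv (\<lambda>t. RIJ R S n I J (shift u I t)))"
proof -
  let ?M = "\<lambda>t. RIJ R S n I J (shift u I t)"
  have "restr (Qk R S n k I J u) = deriv0 (k - 2) (\<lambda>t. restr (opmul S n (opinv S n (?M t)) (dderiv ?M t)))"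
    unfolding Qk_def restr_DD DD_1_shift deriv0_restr ..
  then show ?thesis
    unfolding log_deriv_def[abs_def] mult_def .
qed

lemma restr_Qtk: "restr (Qtk R S n k I J u) = - deriv0 (k - 2) (log_deriv (\<lambda>t. RIJ R S n I J (shift u J t)))"
proof -
  let ?M = "\<lambda>t. RIJ R S n I J (shift u J t)"
  have "restr (Qtk R S n k I J u) = - deriv0 (k - 2) (\<lambda>t. restr (opmul S n (opinv S n (?M t)) (dderiv ?M t)))"
    unfolding Qtk_def restr_opneg restr_DD DD_1_shift deriv0_restr ..
  then show ?thesis
    unfolding log_deriv_def[abs_def] mult_def .
qed

lemma restr_Qk_factor_prod:
  "restr (Qk R S n k [s] J u) = deriv0 (k - 2) (log_deriv (factor_prod (\<lambda>j t. Rop R s j (shift u [s] t)) (rev J)))"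
  unfolding restr_Qk by (rule deriv0_log_deriv_cong) (simp add: restr_RIJ_left factor_prod_def)

lemma restr_Qtk_factor_prod:
  "restr (Qtk R S n k I [s] u) = - deriv0 (k - 2) (log_deriv (factor_prod (\<lambda>j t. Rop R j s (shift u [s] t)) I))"
  unfolding restr_Qtk by (subst deriv0_log_deriv_cong) (simp_all add: restr_RIJ_right factor_prod_def)

end

section \<open>The setting of the theorem\<close>

lemma double_series_holomorphic:
  fixes d :: "nat \<Rightarrow> nat \<Rightarrow> complex" and r :: real
  assumes r: "0 < r"
    and hs: "\<And>w. norm w < r \<Longrightarrow> ((\<lambda>(i, j). d i j * w ^ i) has_sum F w) UNIV"
  shows "F holomorphic_on ball 0 r"
proof -
  define w0 :: complex where "w0 = of_real (r / 2)"
  have w0: "norm w0 < r" "w0 \<noteq> 0" using r by (auto simp: w0_def)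
  have summ: "(\<lambda>j. d i j) summable_on UNIV" for i
  proof -
    have "(\<lambda>(i, j). d i j * w0 ^ i) summable_on (Sigma UNIV (\<lambda>_. UNIV))"
      using hs[OF w0(1)] by (auto simp: summable_on_def)
    then have "(\<lambda>j. d i j * w0 ^ i) summable_on UNIV"
      using summable_on_SigmaD1[of "\<lambda>i j. d i j * w0 ^ i" UNIV "\<lambda>_. UNIV" i] by simp
    then have "(\<lambda>j. (1 / w0 ^ i) * (d i j * w0 ^ i)) summable_on UNIV"
      by (rule summable_on_cmult_right)
    moreover have "(\<lambda>j. (1 / w0 ^ i) * (d i j * w0 ^ i)) = (\<lambda>j. d i j)" using w0(2) by (auto simp: fun_eq_iff)
    ultimately show ?thesis by simp
  qed
  define b where "b i = infsum (\<lambda>j. d i j) UNIV" for i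
  have "(\<lambda>i. b i * (w - 0) ^ i) sums F w" if w: "w \<in> ball 0 r" for w
  proof -
    have w': "norm w < r" using w by simp
    have inner: "((\<lambda>j. d i j * w ^ i) has_sum (b i * w ^ i)) UNIV" for i
      unfolding b_def by (rule has_sum_cmult_left[OF has_sum_infsum[OF summ]])
    have "((\<lambda>(i, j). d i j * w ^ i) has_sum F w) (Sigma UNIV (\<lambda>_. UNIV))"
      using hs[OF w'] by simp
    then have "((\<lambda>i. b i * w ^ i) has_sum F w) UNIV"
      by (rule has_sum_SigmaD) (use inner in simp)
    then show ?thesis by (simp add: has_sum_imp_sums)
  qed
  then show ?thesis by (rule power_series_holomorphic)
qed

lemma analytic_R_holomorphic:
  assumes an: "analytic_R n r R" and v: "norm v < r"
    and p: "fst p < n" "snd p < n" and q: "fst q < n" "snd q < n"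
  shows "(\<lambda>t. R t v p q) holomorphic_on ball 0 r" and "(\<lambda>t. R v t p q) holomorphic_on ball 0 r"
proof -
  have r: "0 < r" using an by (simp add: analytic_R_def)
  have "\<exists>c :: nat \<times> nat \<Rightarrow> complex. \<forall>u v. norm u < r \<longrightarrow> norm v < r \<longrightarrow>
      ((\<lambda>(i, j). c (i, j) * u ^ i * v ^ j) has_sum R u v p q) UNIV"
  proof -
    obtain p1 p2 q1 q2 where pq: "p = (p1, p2)" "q = (q1, q2)" by (cases p, cases q) auto
    show ?thesis using an p q unfolding analytic_R_def pq by simp
  qed
  then obtain c :: "nat \<times> nat \<Rightarrow> complex" where c0: "\<forall>u v. norm u < r \<longrightarrow> norm v < r \<longrightarrow>
      ((\<lambda>(i, j). c (i, j) * u ^ i * v ^ j) has_sum R u v p q) UNIV" by blast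
  have c: "((\<lambda>(i, j). c (i, j) * u ^ i * v ^ j) has_sum R u v p q) UNIV" if "norm u < r" "norm v < r" for u v
    using c0 that by blast
  show "(\<lambda>t. R t v p q) holomorphic_on ball 0 r"
  proof (rule double_series_holomorphic[OF r, where d = "\<lambda>i j. c (i, j) * v ^ j"])
    fix w :: complex assume w: "norm w < r"
    have "(\<lambda>(i, j). c (i, j) * v ^ j * w ^ i) = (\<lambda>(i, j). c (i, j) * w ^ i * v ^ j)"
      by (auto simp: fun_eq_iff mult_ac)
    then show "((\<lambda>(i, j). c (i, j) * v ^ j * w ^ i) has_sum R w v p q) UNIV"
      using c[OF w v] by simp
  qed
  show "(\<lambda>t. R v t p q) holomorphic_on ball 0 r"
  proof (rule double_series_holomorphic[OF r, where d = "\<lambda>j i. c (i, j) * v ^ i"])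
    fix w :: complex assume w: "norm w < r"
    have h: "((\<lambda>(i, j). c (i, j) * v ^ i * w ^ j) has_sum R v w p q) UNIV" using c[OF v w] .
    have "((\<lambda>(i, j). c (i, j) * v ^ i * w ^ j) \<circ> prod.swap has_sum R v w p q) UNIV"
      using has_sum_reindex[of prod.swap UNIV "\<lambda>(i, j). c (i, j) * v ^ i * w ^ j" "R v w p q"] h
      by simp
    moreover have "(\<lambda>(i, j). c (i, j) * v ^ i * w ^ j) \<circ> prod.swap = (\<lambda>(j, i). c (i, j) * v ^ i * w ^ j)"
      by (auto simp: fun_eq_iff)
    ultimately show "((\<lambda>(j, i). c (i, j) * v ^ i * w ^ j) has_sum R v w p q) UNIV" by simp
  qed
qed

lemma unitarity_entrywise:
  assumes unitary: "\<forall>w. (\<forall>i\<in>{1,2}. norm (w i) < r) \<longrightarrow>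
      op_eq {1,2} n (opmul {1,2} n (Rop R 1 2 w) (Rop R 2 1 w)) opid"
    and n: "0 < n" and v: "norm v < r" and w: "norm w < r"
    and lt: "a < n" "b < n" "a' < n" "b' < n"
  shows "(\<Sum>c<n. \<Sum>e<n. R v w (a, b) (c, e) * R w v (e, c) (b', a')) = (if a = a' \<and> b = b' then 1 else 0)"
proof -
  interpret pair: tensor_ops "{1, 2::nat}" n
    using n by unfold_locales auto
  define W where "W = (\<lambda>l::nat. if l = 1 then v else w)"
  define x where "x = (\<lambda>l::nat. if l = 1 then a else if l = 2 then b else 0)"
  define y where "y = (\<lambda>l::nat. if l = 1 then a' else if l = 2 then b' else 0)"
  have x: "x \<in> cfgs {1, 2} n" and y: "y \<in> cfgs {1, 2} n"
    using lt by (auto simp: x_def y_def cfgs_def)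
  have "op_eq {1, 2} n (opmul {1, 2} n (Rop R 1 2 W) (Rop R 2 1 W)) opid"
    using unitary v w by (auto simp: W_def)
  then have "opmul {1, 2} n (Rop R 1 2 W) (Rop R 2 1 W) x y = opid x y"
    using x y unfolding op_eq_def by blast
  moreover have "opmul {1, 2} n (Rop R 1 2 W) (Rop R 2 1 W) x y =
      (\<Sum>c<n. \<Sum>e<n. R v w (a, b) (c, e) * R w v (e, c) (b', a'))"
    using pair.opmul_Rop_Rop[of 1 2 x R W y] x by (simp add: x_def y_def W_def)
  moreover have "opid x y = (if a = a' \<and> b = b' then 1 else 0)"
    by (auto simp: opid_def x_def y_def fun_eq_iff)
  ultimately show ?thesis
    by simp
qed

locale R_setting = tensor_ops S n for S n +
  fixes r :: real and R :: "complex \<Rightarrow> complex \<Rightarrow> nat \<times> nat \<Rightarrow> nat \<times> nat \<Rightarrow> complex"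
    and u :: "nat \<Rightarrow> complex"
  assumes analytic: "analytic_R n r R"
    and flip_at_zero: "\<And>p q. fst p < n \<Longrightarrow> snd p < n \<Longrightarrow> fst q < n \<Longrightarrow> snd q < n \<Longrightarrow>
      R 0 0 p q = (if fst p = snd q \<and> snd p = fst q then 1 else 0)"
    and unitary: "\<And>v w a b a' b'. norm v < r \<Longrightarrow> norm w < r \<Longrightarrow> a < n \<Longrightarrow> b < n \<Longrightarrow> a' < n \<Longrightarrow> b' < n \<Longrightarrow>
      (\<Sum>c<n. \<Sum>e<n. R v w (a, b) (c, e) * R w v (e, c) (b', a')) = (if a = a' \<and> b = b' then 1 else 0)"
    and u_small: "\<And>l. l \<in> S \<Longrightarrow> norm (u l) < r"
begin

lemma r_pos: "0 < r"
  using analytic by (simp add: analytic_R_def)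

sublocale tensor_holo S n "ball 0 r"
  by unfold_locales (auto simp: r_pos)

lemma holo_Rop_shift:
  assumes s: "u s = 0" and i: "i \<in> S" and j: "j \<in> S" and ij: "i \<noteq> j"
  shows "holo (\<lambda>t. Rop R i j (shift u [s] t))"
  unfolding holo_def
proof (intro ballI)
  fix x y assume x: "x \<in> cfg" and y: "y \<in> cfg"
  have lt: "x i < n" "x j < n" "y i < n" "y j < n"
    using x y i j by (auto simp: cfgs_def)
  define ind where "ind = (if \<forall>l. l \<noteq> i \<longrightarrow> l \<noteq> j \<longrightarrow> x l = y l then 1 else (0::complex))"
  have e: "(\<lambda>t. Rop R i j (shift u [s] t) x y) =
     (\<lambda>t. R (if i = s then t else u i) (if j = s then t else u j) (x i, x j) (y i, y j) * ind)"
    using s by (auto simp: Rop_def shift_def ind_def fun_eq_iff)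
  have "(\<lambda>t. R (if i = s then t else u i) (if j = s then t else u j) (x i, x j) (y i, y j)) holomorphic_on ball 0 r"
    using analytic_R_holomorphic[OF analytic u_small[OF j], of "(x i, x j)" "(y i, y j)"]
      analytic_R_holomorphic[OF analytic u_small[OF i], of "(x i, x j)" "(y i, y j)"] lt ij
    by (cases "i = s"; cases "j = s") simp_all
  then show "(\<lambda>t. Rop R i j (shift u [s] t) x y) holomorphic_on ball 0 r"
    unfolding e by (intro holomorphic_intros)
qed

lemma invertible_family_Rop_shift:
  assumes s: "s \<in> S" "u s = 0" and j: "j \<in> S" "j \<noteq> s"
  shows "invertible_family {s, j} (\<lambda>t. Rop R s j (shift u [s] t)) (\<lambda>t. Rop R j s (shift u [s] t))"
    and "invertible_family {s, j} (\<lambda>t. Rop R j s (shift u [s] t)) (\<lambda>t. Rop R s j (shift u [s] t))"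
proof -
  have small: "norm (shift u [s] t l) < r" if "t \<in> ball 0 r" "l \<in> S" for t l
    using that u_small s by (auto simp: shift_def)
  have inv: "Rop R i i' (shift u [s] t) \<odot> Rop R i' i (shift u [s] t) = one_op"
    if "{i, i'} = {s, j}" "t \<in> ball 0 r" for i i' t
    using that s j by (intro Rop_mult_Rop unitary small) (auto simp: doubleton_eq_iff)
  have triv: "trivial_on (S - {s, j}) (Rop R i i' w)" if "{i, i'} = {s, j}" for i i' w
    using trivial_on_Rop[of i i' R w] that by simp
  show "invertible_family {s, j} (\<lambda>t. Rop R s j (shift u [s] t)) (\<lambda>t. Rop R j s (shift u [s] t))"
    "invertible_family {s, j} (\<lambda>t. Rop R j s (shift u [s] t)) (\<lambda>t. Rop R s j (shift u [s] t))"
    unfolding invertible_family_def using holo_Rop_shift s j inv triv by (auto simp: insert_commute)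
qed

lemma swap_factor_Rop_shift:
  assumes s: "s \<in> S" "u s = 0" and j: "j \<in> S" "j \<noteq> s" "u j = 0"
  shows "swap_factor s j (\<lambda>t. Rop R s j (shift u [s] t)) (\<lambda>t. Rop R j s (shift u [s] t))"
    and "swap_factor s j (\<lambda>t. Rop R j s (shift u [s] t)) (\<lambda>t. Rop R s j (shift u [s] t))"
proof -
  have "restr (Rop R s j (shift u [s] 0)) = restr (swap_op s j)"
    "restr (Rop R j s (shift u [s] 0)) = restr (swap_op s j)"
    using restr_Rop_flip[OF s(1) j(1), of u R] restr_Rop_flip[OF j(1) s(1), of u R] s j flip_at_zero
    by (simp_all add: swap_op_commute)
  then show "swap_factor s j (\<lambda>t. Rop R s j (shift u [s] t)) (\<lambda>t. Rop R j s (shift u [s] t))"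
    "swap_factor s j (\<lambda>t. Rop R j s (shift u [s] t)) (\<lambda>t. Rop R s j (shift u [s] t))"
    unfolding swap_factor_def using invertible_family_Rop_shift[OF s j(1,2)] by auto
qed

lemma Qk_difference_right_invariant:
  assumes k: "2 \<le> k" and slots: "{1..k} \<subseteq> S" "set (a @ b) \<subseteq> S" and u0: "\<forall>i\<in>{1..k}. u i = 0"
    and dist: "distinct (a @ b)" and disj: "set (a @ b) \<inter> {1..k} = {}"
  shows "op_eq S n
    (opsub (Qk R S n k [1] (a @ [2..<k] @ b) u) (conjop S n (RIJ R S n [1] a u) (Qk R S n k [1] ([2..<k] @ b) u)))
    (opsub (Qk R S n k [1] (a @ [2..<k]) u) (conjop S n (RIJ R S n [1] a u) (Qk R S n k [1] [2..<k] u)))"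
proof -
  \<comment> \<open>\<open>R\<^sub>1\<^sub>J\<close> multiplies its factors in the reverse order of \<open>J\<close>, hence \<open>p = rev b\<close> and \<open>q = rev a\<close>.\<close>
  define f where "f = (\<lambda>j t. Rop R 1 j (shift u [1] t))"
  define c where "c = rev [2..<k]"
  define X where "X = (\<lambda>p q. deriv0 (k - 2) (log_deriv (factor_prod f (p @ c @ q))))"
  have Q: "restr (Qk R S n k [1] (a' @ [2..<k] @ b') u) = X (rev b') (rev a')" for a' b'
    unfolding restr_Qk_factor_prod X_def f_def c_def by simp
  have "restr (RIJ R S n [1] a u) = restr (factor_prod f (rev a) 0)"
    by (simp add: restr_RIJ_left f_def factor_prod_def)
  then have conj: "restr (conjop S n (RIJ R S n [1] a u) Y) = conjugate (factor_prod f (rev a) 0) (restr Y)" for Y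
    by (metis conjugate_restr restr_conjop)
  have one: "1 \<in> S" "u 1 = 0"
    using k slots u0 by auto
  have "X (rev b) (rev a) - conjugate (factor_prod f (rev a) 0) (X (rev b) [])
      = X [] (rev a) - conjugate (factor_prod f (rev a) 0) (X [] [])"
    unfolding X_def
  proof (rule log_deriv_difference[OF one(1), where g = "\<lambda>j t. Rop R j 1 (shift u [1] t)"])
    show "distinct (rev b @ c @ rev a)" "set (rev b @ c @ rev a) \<subseteq> S - {1}" "k - 2 \<le> length c"
      using k dist disj slots by (auto simp: c_def)
    show "invertible_family {1, j} (f j) (\<lambda>t. Rop R j 1 (shift u [1] t))" if "j \<in> set (rev b @ rev a)" for j
      unfolding f_def using that k dist disj slots by (intro invertible_family_Rop_shift(1)[OF one]) auto
    show "swap_factor 1 j (f j) (\<lambda>t. Rop R j 1 (shift u [1] t))" if "j \<in> set c" for j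
      unfolding f_def using that slots u0 by (intro swap_factor_Rop_shift(1)[OF one]) (auto simp: c_def)
  qed
  moreover have "restr (Qk R S n k [1] (a @ [2..<k] @ b) u) = X (rev b) (rev a)"
    "restr (Qk R S n k [1] ([2..<k] @ b) u) = X (rev b) []"
    "restr (Qk R S n k [1] (a @ [2..<k]) u) = X [] (rev a)"
    "restr (Qk R S n k [1] [2..<k] u) = X [] []"
    using Q[of a b] Q[of "[]" b] Q[of a "[]"] Q[of "[]" "[]"] by simp_all
  ultimately show ?thesis
    unfolding op_eq_iff_restr restr_opsub conj by simp
qed

lemma Qtk_difference_left_invariant:
  assumes k: "2 \<le> k" and slots: "{1..k} \<subseteq> S" "set (a @ b) \<subseteq> S" and u0: "\<forall>i\<in>{1..k}. u i = 0"
    and dist: "distinct (a @ b)" and disj: "set (a @ b) \<inter> {1..k} = {}"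
  shows "op_eq S n
    (opsub (Qtk R S n k (a @ [1..<k] @ b) [k] u) (conjop S n (RIJ R S n b [k] u) (Qtk R S n k (a @ [1..<k]) [k] u)))
    (opsub (Qtk R S n k ([1..<k] @ b) [k] u) (conjop S n (RIJ R S n b [k] u) (Qtk R S n k [1..<k] [k] u)))"
proof -
  define f where "f = (\<lambda>j t. Rop R j k (shift u [k] t))"
  define c where "c = [1..<k]"
  define X where "X = (\<lambda>p q. deriv0 (k - 2) (log_deriv (factor_prod f (p @ c @ q))))"
  have Q: "restr (Qtk R S n k (a' @ [1..<k] @ b') [k] u) = - X a' b'" for a' b'
    unfolding restr_Qtk_factor_prod X_def f_def c_def ..
  have "restr (RIJ R S n b [k] u) = restr (factor_prod f b 0)"
    by (simp add: restr_RIJ_right f_def factor_prod_def)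
  then have conj: "restr (conjop S n (RIJ R S n b [k] u) Y) = conjugate (factor_prod f b 0) (restr Y)" for Y
    by (metis conjugate_restr restr_conjop)
  have kS: "k \<in> S" "u k = 0"
    using k slots u0 by auto
  have "X a b - conjugate (factor_prod f b 0) (X a []) = X [] b - conjugate (factor_prod f b 0) (X [] [])"
    unfolding X_def
  proof (rule log_deriv_difference[OF kS(1), where g = "\<lambda>j t. Rop R k j (shift u [k] t)"])
    show "distinct (a @ c @ b)" "set (a @ c @ b) \<subseteq> S - {k}" "k - 2 \<le> length c"
      using k dist disj slots by (auto simp: c_def)
    show "invertible_family {k, j} (f j) (\<lambda>t. Rop R k j (shift u [k] t))" if "j \<in> set (a @ b)" for j
      unfolding f_def using that k dist disj slots by (intro invertible_family_Rop_shift(2)[OF kS]) auto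
    show "swap_factor k j (f j) (\<lambda>t. Rop R k j (shift u [k] t))" if "j \<in> set c" for j
      unfolding f_def using that slots u0 by (intro swap_factor_Rop_shift(2)[OF kS]) (auto simp: c_def)
  qed
  moreover have "restr (Qtk R S n k (a @ [1..<k] @ b) [k] u) = - X a b"
    "restr (Qtk R S n k (a @ [1..<k]) [k] u) = - X a []"
    "restr (Qtk R S n k ([1..<k] @ b) [k] u) = - X [] b"
    "restr (Qtk R S n k [1..<k] [k] u) = - X [] []"
    using Q[of a b] Q[of a "[]"] Q[of "[]" b] Q[of "[]" "[]"] by simp_all
  ultimately show ?thesis
    unfolding op_eq_iff_restr restr_opsub conj by (simp add: conjugate_uminus) (metis minus_diff_eq)
qed

end

theorem mainTheorem2:
  fixes n :: nat and r :: real
    and R :: "complex \<Rightarrow> complex \<Rightarrow> nat \<times> nat \<Rightarrow> nat \<times> nat \<Rightarrow> complex"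
    and k :: nat and a b :: "nat list"
  assumes analytic: "analytic_R n r R"
    and YBE: "\<forall>w. (\<forall>i\<in>{1,2,3}. norm (w i) < r) \<longrightarrow>
      op_eq {1,2,3} n
        (opmul {1,2,3} n (opmul {1,2,3} n (Rop R 1 2 w) (Rop R 1 3 w)) (Rop R 2 3 w))
        (opmul {1,2,3} n (opmul {1,2,3} n (Rop R 2 3 w) (Rop R 1 3 w)) (Rop R 1 2 w))"
    and regular: "\<forall>u. norm u < r \<longrightarrow> (\<forall>p q. fst p < n \<longrightarrow> snd p < n \<longrightarrow> fst q < n \<longrightarrow> snd q < n \<longrightarrow>
      R u u p q = (if fst p = snd q \<and> snd p = fst q then 1 else 0))"
    and unitary: "\<forall>w. (\<forall>i\<in>{1,2}. norm (w i) < r) \<longrightarrow>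
      op_eq {1,2} n (opmul {1,2} n (Rop R 1 2 w) (Rop R 2 1 w)) opid"
    and k2: "2 \<le> k"
    and dist: "distinct (a @ b)"
    and disj: "set (a @ b) \<inter> {1..k} = {}"
  shows "\<forall>u. (\<forall>i\<in>{1..k}. u i = 0) \<and> (\<forall>i\<in>set (a @ b). norm (u i) < r) \<longrightarrow>
     op_eq ({1..k} \<union> set a \<union> set b) n
       (opsub (Qk R ({1..k} \<union> set a \<union> set b) n k [1] (a @ [2..<k] @ b) u)
              (conjop ({1..k} \<union> set a \<union> set b) n (RIJ R ({1..k} \<union> set a \<union> set b) n [1] a u)
                 (Qk R ({1..k} \<union> set a \<union> set b) n k [1] ([2..<k] @ b) u)))
       (opsub (Qk R ({1..k} \<union> set a \<union> set b) n k [1] (a @ [2..<k]) u)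
              (conjop ({1..k} \<union> set a \<union> set b) n (RIJ R ({1..k} \<union> set a \<union> set b) n [1] a u)
                 (Qk R ({1..k} \<union> set a \<union> set b) n k [1] [2..<k] u)))
   \<and> op_eq ({1..k} \<union> set a \<union> set b) n
       (opsub (Qtk R ({1..k} \<union> set a \<union> set b) n k (a @ [1..<k] @ b) [k] u)
              (conjop ({1..k} \<union> set a \<union> set b) n (RIJ R ({1..k} \<union> set a \<union> set b) n b [k] u)
                 (Qtk R ({1..k} \<union> set a \<union> set b) n k (a @ [1..<k]) [k] u)))
       (opsub (Qtk R ({1..k} \<union> set a \<union> set b) n k ([1..<k] @ b) [k] u)
              (conjop ({1..k} \<union> set a \<union> set b) n (RIJ R ({1..k} \<union> set a \<union> set b) n b [k] u)
                 (Qtk R ({1..k} \<union> set a \<union> set b) n k [1..<k] [k] u)))"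
proof -
  \<comment> \<open>Only unitarity and \<open>R(0, 0) = P\<close> enter.\<close>
  let ?S = "{1..k} \<union> set a \<union> set b"
  have r: "0 < r"
    using analytic by (simp add: analytic_R_def)
  show ?thesis
  proof (cases "n = 0")
    case True
    then have "cfgs ?S n = {}"
      using k2 by (auto simp: cfgs_def)
    then show ?thesis
      by (simp add: op_eq_def)
  next
    case False
    have "R_setting ?S n r R u" if u: "(\<forall>i\<in>{1..k}. u i = 0) \<and> (\<forall>i\<in>set (a @ b). norm (u i) < r)" for u
    proof
      show "R 0 0 p q = (if fst p = snd q \<and> snd p = fst q then 1 else 0)"
        if "fst p < n" "snd p < n" "fst q < n" "snd q < n" for p q
        using regular r that by (cases p, cases q) simp
    qed (use analytic unitary unitarity_entrywise False u r in auto)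
    then show ?thesis
      using k2 dist disj
      by (intro allI impI conjI R_setting.Qk_difference_right_invariant
          R_setting.Qtk_difference_left_invariant) auto
  qed
qed

end
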